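(* (i) Every finite BL-algebra with $n$ elements, $2\leq n\leq 5$, which is not an MV-algebra is isomorphic to an ordinal product $\mathcal{L}_1\boxtimes\mathcal{L}_2$ of BL-algebras. (ii) Writing $\mathcal{BL}_n$ for the set of BL-algebras with $n$ elements and $\mathcal{MV}_n$ for the set of MV-algebras with $n$ elements (both up to isomorphism), one has $|\mathcal{BL}_2|=|\mathcal{MV}_2|=\pi(2)+1$, $|\mathcal{BL}_3|=|\mathcal{MV}_3|+|\mathcal{BL}_2|=\pi(3)+\pi(2)+2$, $|\mathcal{BL}_4|=|\mathcal{MV}_4|+|\mathcal{BL}_3|+|\mathcal{BL}_2|=\pi(4)+\pi(3)+2\pi(2)+4$, $|\mathcal{BL}_5|=|\mathcal{MV}_5|+|\mathcal{BL}_4|+|\mathcal{BL}_3|+|\mathcal{BL}_2|=\pi(5)+\pi(4)+2\pi(3)+4\pi(2)+8$.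
   Context: A residuated lattice is an algebra $(L,\wedge,\vee,\odot,\rightarrow,0,1)$ with $(L,\wedge,\vee,0,1)$ a bounded lattice, $(L,\odot,1)$ a commutative ordered monoid, and $z\leq x\rightarrow y$ iff $x\odot z\leq y$. A BL-algebra is a residuated lattice satisfying $(x\rightarrow y)\vee(y\rightarrow x)=1$ and $x\odot(x\rightarrow y)=x\wedge y$. An MV-algebra is (equivalently) a residuated lattice satisfying $(x\rightarrow y)\rightarrow y=(y\rightarrow x)\rightarrow x$; MV-algebras are exactly the BL-algebras with $x^{**}=x$, where $x^*=x\rightarrow 0$. Ordinal product: given residuated lattices $\mathcal{L}_1=(L_1,\wedge_1,\vee_1,\odot_1,\rightarrow_1,0_1,1_1)$ and $\mathcal{L}_2=(L_2,\wedge_2,\vee_2,\odot_2,\rightarrow_2,0_2,1_2)$ with $1_1=0_2$ and $(L_1\setminus\{1_1\})\cap(L_2\setminus\{0_2\})=\emptyset$, $\mathcal{L}_1\boxtimes\mathcal{L}_2$ has universe $L_1\cup L_2$, $0=0_1$, $1=1_2$; $x\leq y$ iff ($x,y\in L_1$, $x\leq_1 y$) or ($x,y\in L_2$, $x\leq_2 y$) or ($x\in L_1$, $y\in L_2$); meet and join are computed in $L_i$ when both arguments lie in $L_i$, and otherwise $x\wedge y=x$, $x\vee y=y$ for $x\in L_1,y\in L_2$; $x\rightarrow y=1$ if $x\leq y$, $x\rightarrow y=x\rightarrow_i y$ if $x\not\leq y$ and $x,y\in L_i$, and $x\rightarrow y=y$ if $x\not\leq y$, $x\in L_2$, $y\in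 L_1\setminus\{1_1\}$; $x\odot y=x\odot_i y$ if $x,y\in L_i$, and $x\odot y=x$ if $x\in L_1\setminus\{1_1\}$, $y\in L_2$ (and symmetrically). For an integer $n\geq 2$, $\pi(n)$ denotes the number of (unordered) decompositions of $n$ as a product of at least two factors each greater than $1$ (so $\pi(n)=0$ for $n$ prime). *)

theory Defs
  imports Main "HOL-Library.Multiset"
begin

record 'a rlat =
  rl_car  :: "'a set"
  rl_meet :: "'a \<Rightarrow> 'a \<Rightarrow> 'a"
  rl_join :: "'a \<Rightarrow> 'a \<Rightarrow> 'a"
  rl_mult :: "'a \<Rightarrow> 'a \<Rightarrow> 'a"
  rl_imp  :: "'a \<Rightarrow> 'a \<Rightarrow> 'a"
  rl_zero :: "'a"
  rl_one  :: "'a"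

definition rl_le :: "'a rlat \<Rightarrow> 'a \<Rightarrow> 'a \<Rightarrow> bool" where
  "rl_le L x y \<longleftrightarrow> rl_meet L x y = x"

definition residuated_lattice :: "'a rlat \<Rightarrow> bool" where
  "residuated_lattice L \<longleftrightarrow>
     (let C = rl_car L; m = rl_meet L; j = rl_join L; t = rl_mult L; r = rl_imp L in
      rl_zero L \<in> C \<and> rl_one L \<in> C \<and>
      (\<forall>x\<in>C. \<forall>y\<in>C. m x y \<in> C \<and> j x y \<in> C \<and> t x y \<in> C \<and> r x y \<in> C) \<and>
      \<comment> \<open>lattice\<close>
      (\<forall>x\<in>C. \<forall>y\<in>C. m x y = m y x \<and> j x y = j y x) \<and>
      (\<forall>x\<in>C. \<forall>y\<in>C. \<forall>z\<in>C. m x (m y z) = m (m x y) z \<and> j x (j y z) = j (j x y) z) \<and>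
      (\<forall>x\<in>C. \<forall>y\<in>C. m x (j x y) = x \<and> j x (m x y) = x) \<and>
      \<comment> \<open>bounds\<close>
      (\<forall>x\<in>C. rl_le L (rl_zero L) x \<and> rl_le L x (rl_one L)) \<and>
      \<comment> \<open>commutative ordered monoid\<close>
      (\<forall>x\<in>C. \<forall>y\<in>C. t x y = t y x) \<and>
      (\<forall>x\<in>C. \<forall>y\<in>C. \<forall>z\<in>C. t x (t y z) = t (t x y) z) \<and>
      (\<forall>x\<in>C. t x (rl_one L) = x) \<and>
      (\<forall>x\<in>C. \<forall>y\<in>C. \<forall>z\<in>C. rl_le L x y \<longrightarrow> rl_le L (t x z) (t y z)) \<and>
      \<comment> \<open>residuation\<close>
      (\<forall>x\<in>C. \<forall>y\<in>C. \<forall>z\<in>C. rl_le L z (r x y) \<longleftrightarrow> rl_le L (t x z) y))"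

definition BL_algebra :: "'a rlat \<Rightarrow> bool" where
  "BL_algebra L \<longleftrightarrow> residuated_lattice L \<and>
     (\<forall>x\<in>rl_car L. \<forall>y\<in>rl_car L.
        rl_join L (rl_imp L x y) (rl_imp L y x) = rl_one L \<and>
        rl_mult L x (rl_imp L x y) = rl_meet L x y)"

definition MV_algebra :: "'a rlat \<Rightarrow> bool" where
  "MV_algebra L \<longleftrightarrow> residuated_lattice L \<and>
     (\<forall>x\<in>rl_car L. \<forall>y\<in>rl_car L.
        rl_imp L (rl_imp L x y) y = rl_imp L (rl_imp L y x) x)"

definition ord_prod_ok :: "'a rlat \<Rightarrow> 'a rlat \<Rightarrow> bool" where
  "ord_prod_ok L1 L2 \<longleftrightarrow> rl_one L1 = rl_zero L2 \<and>
     (rl_car L1 - {rl_one L1}) \<inter> (rl_car L2 - {rl_zero L2}) = {}"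

definition op_le :: "'a rlat \<Rightarrow> 'a rlat \<Rightarrow> 'a \<Rightarrow> 'a \<Rightarrow> bool" where
  "op_le L1 L2 x y \<longleftrightarrow>
     (x \<in> rl_car L1 \<and> y \<in> rl_car L1 \<and> rl_le L1 x y) \<or>
     (x \<in> rl_car L2 \<and> y \<in> rl_car L2 \<and> rl_le L2 x y) \<or>
     (x \<in> rl_car L1 \<and> y \<in> rl_car L2)"

definition ord_prod :: "'a rlat \<Rightarrow> 'a rlat \<Rightarrow> 'a rlat" where
  "ord_prod L1 L2 = (let C1 = rl_car L1; C2 = rl_car L2 in
    \<lparr> rl_car = C1 \<union> C2,
      rl_meet = (\<lambda>x y. if x \<in> C1 \<and> y \<in> C1 then rl_meet L1 x y
                       else if x \<in> C2 \<and> y \<in> C2 then rl_meet L2 x y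
                       else if x \<in> C1 then x else y),
      rl_join = (\<lambda>x y. if x \<in> C1 \<and> y \<in> C1 then rl_join L1 x y
                       else if x \<in> C2 \<and> y \<in> C2 then rl_join L2 x y
                       else if x \<in> C1 then y else x),
      rl_mult = (\<lambda>x y. if x \<in> C1 \<and> y \<in> C1 then rl_mult L1 x y
                       else if x \<in> C2 \<and> y \<in> C2 then rl_mult L2 x y
                       else if x \<in> C1 then x else y),
      rl_imp = (\<lambda>x y. if op_le L1 L2 x y then rl_one L2
                      else if x \<in> C1 \<and> y \<in> C1 then rl_imp L1 x y
                      else if x \<in> C2 \<and> y \<in> C2 then rl_imp L2 x y
                      else y),
      rl_zero = rl_zero L1,
      rl_one = rl_one L2 \<rparr>)"

definition rl_iso :: "('a \<Rightarrow> 'b) \<Rightarrow> 'a rlat \<Rightarrow> 'b rlat \<Rightarrow> bool" where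
  "rl_iso f A B \<longleftrightarrow> bij_betw f (rl_car A) (rl_car B) \<and>
     f (rl_zero A) = rl_zero B \<and> f (rl_one A) = rl_one B \<and>
     (\<forall>x\<in>rl_car A. \<forall>y\<in>rl_car A.
        f (rl_meet A x y) = rl_meet B (f x) (f y) \<and>
        f (rl_join A x y) = rl_join B (f x) (f y) \<and>
        f (rl_mult A x y) = rl_mult B (f x) (f y) \<and>
        f (rl_imp A x y) = rl_imp B (f x) (f y))"

definition rl_isomorphic :: "'a rlat \<Rightarrow> 'b rlat \<Rightarrow> bool" where
  "rl_isomorphic A B \<longleftrightarrow> (\<exists>f. rl_iso f A B)"

text \<open>Number of isomorphism classes of algebras satisfying P with n elements:
  every n-element algebra is isomorphic to one on carrier {0..<n}.\<close>
definition count_classes :: "(nat rlat \<Rightarrow> bool) \<Rightarrow> nat \<Rightarrow> nat" where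
  "count_classes P n =
     (let S = {A. P A \<and> rl_car A = {0..<n}} in
      card (S // {(A, B). A \<in> S \<and> B \<in> S \<and> rl_isomorphic A B}))"

abbreviation num_BL :: "nat \<Rightarrow> nat" where "num_BL \<equiv> count_classes BL_algebra"
abbreviation num_MV :: "nat \<Rightarrow> nat" where "num_MV \<equiv> count_classes MV_algebra"

definition mult_partitions :: "nat \<Rightarrow> nat" where
  "mult_partitions n = card {M :: nat multiset. size M \<ge> 2 \<and> (\<forall>x\<in>#M. x > 1) \<and> prod_mset M = n}"

end

theory Submission
  imports Defs
begin

section \<open>Residuated lattices\<close>

locale residuated =
  fixes L :: "'a rlat"
  assumes residuated_lattice: "residuated_lattice L"
begin

abbreviation carrier ("C") where "C \<equiv> rl_car L"
abbreviation meet (infixl "\<sqinter>" 70) where "x \<sqinter> y \<equiv> rl_meet L x y"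
abbreviation join (infixl "\<squnion>" 65) where "x \<squnion> y \<equiv> rl_join L x y"
abbreviation mult (infixl "\<odot>" 70) where "x \<odot> y \<equiv> rl_mult L x y"
abbreviation imp (infixr "\<rightharpoonup>" 60) where "x \<rightharpoonup> y \<equiv> rl_imp L x y"
abbreviation bot ("\<zero>") where "\<zero> \<equiv> rl_zero L"
abbreviation top ("\<one>") where "\<one> \<equiv> rl_one L"
abbreviation le (infix "\<preceq>" 50) where "x \<preceq> y \<equiv> rl_le L x y"
abbreviation less (infix "\<prec>" 50) where "x \<prec> y \<equiv> x \<preceq> y \<and> x \<noteq> y"

lemmas axioms = residuated_lattice[unfolded residuated_lattice_def Let_def]

lemma bot_closed [simp]: "\<zero> \<in> C"
  using axioms by (elim conjE) blast
lemma top_closed [simp]: "\<one> \<in> C"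
  using axioms by (elim conjE) blast
lemma meet_closed [simp]: "x \<in> C \<Longrightarrow> y \<in> C \<Longrightarrow> x \<sqinter> y \<in> C"
  using axioms by (elim conjE) blast
lemma join_closed [simp]: "x \<in> C \<Longrightarrow> y \<in> C \<Longrightarrow> x \<squnion> y \<in> C"
  using axioms by (elim conjE) blast
lemma mult_closed [simp]: "x \<in> C \<Longrightarrow> y \<in> C \<Longrightarrow> x \<odot> y \<in> C"
  using axioms by (elim conjE) blast
lemma imp_closed [simp]: "x \<in> C \<Longrightarrow> y \<in> C \<Longrightarrow> x \<rightharpoonup> y \<in> C"
  using axioms by (elim conjE) blast
lemma meet_commute: "x \<in> C \<Longrightarrow> y \<in> C \<Longrightarrow> x \<sqinter> y = y \<sqinter> x"
  using axioms by (elim conjE) blast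
lemma join_commute: "x \<in> C \<Longrightarrow> y \<in> C \<Longrightarrow> x \<squnion> y = y \<squnion> x"
  using axioms by (elim conjE) blast
lemma meet_assoc: "x \<in> C \<Longrightarrow> y \<in> C \<Longrightarrow> z \<in> C \<Longrightarrow> x \<sqinter> (y \<sqinter> z) = x \<sqinter> y \<sqinter> z"
  using axioms by (elim conjE) blast
lemma join_assoc: "x \<in> C \<Longrightarrow> y \<in> C \<Longrightarrow> z \<in> C \<Longrightarrow> x \<squnion> (y \<squnion> z) = x \<squnion> y \<squnion> z"
  using axioms by (elim conjE) blast
lemma meet_join_absorb: "x \<in> C \<Longrightarrow> y \<in> C \<Longrightarrow> x \<sqinter> (x \<squnion> y) = x"
  using axioms by (elim conjE) blast
lemma join_meet_absorb: "x \<in> C \<Longrightarrow> y \<in> C \<Longrightarrow> x \<squnion> (x \<sqinter> y) = x"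
  using axioms by (elim conjE) blast
lemma bot_le [simp]: "x \<in> C \<Longrightarrow> \<zero> \<preceq> x"
  using axioms by (elim conjE) blast
lemma le_top [simp]: "x \<in> C \<Longrightarrow> x \<preceq> \<one>"
  using axioms by (elim conjE) blast
lemma mult_commute: "x \<in> C \<Longrightarrow> y \<in> C \<Longrightarrow> x \<odot> y = y \<odot> x"
  using axioms by (elim conjE) blast
lemma mult_assoc: "x \<in> C \<Longrightarrow> y \<in> C \<Longrightarrow> z \<in> C \<Longrightarrow> x \<odot> (y \<odot> z) = x \<odot> y \<odot> z"
  using axioms by (elim conjE) blast
lemma mult_top [simp]: "x \<in> C \<Longrightarrow> x \<odot> \<one> = x"
  using axioms by (elim conjE) blast
lemma mult_mono_left: "x \<in> C \<Longrightarrow> y \<in> C \<Longrightarrow> z \<in> C \<Longrightarrow> x \<preceq> y \<Longrightarrow> x \<odot> z \<preceq> y \<odot> z"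
  using axioms by (elim conjE) blast
lemma residuation: "x \<in> C \<Longrightarrow> y \<in> C \<Longrightarrow> z \<in> C \<Longrightarrow> z \<preceq> x \<rightharpoonup> y \<longleftrightarrow> x \<odot> z \<preceq> y"
  using axioms by (elim conjE) (simp only:)

lemma le_iff_meet: "x \<preceq> y \<longleftrightarrow> x \<sqinter> y = x"
  by (simp add: rl_le_def)

lemma meet_idem [simp]: "x \<in> C \<Longrightarrow> x \<sqinter> x = x"
  using meet_join_absorb[of x "x \<sqinter> x"] join_meet_absorb[of x x] by simp

lemma le_refl [simp]: "x \<in> C \<Longrightarrow> x \<preceq> x"
  by (simp add: le_iff_meet)

lemma le_antisym: "x \<in> C \<Longrightarrow> y \<in> C \<Longrightarrow> x \<preceq> y \<Longrightarrow> y \<preceq> x \<Longrightarrow> x = y"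
  using meet_commute[of x y] by (simp add: le_iff_meet)

lemma le_trans: "x \<in> C \<Longrightarrow> y \<in> C \<Longrightarrow> z \<in> C \<Longrightarrow> x \<preceq> y \<Longrightarrow> y \<preceq> z \<Longrightarrow> x \<preceq> z"
  using meet_assoc[of x y z] by (simp add: le_iff_meet)

lemma le_iff_join: "x \<in> C \<Longrightarrow> y \<in> C \<Longrightarrow> x \<preceq> y \<longleftrightarrow> x \<squnion> y = y"
  using join_meet_absorb[of y x] meet_join_absorb[of x y] meet_commute[of x y] join_commute[of x y]
  by (auto simp: le_iff_meet)

lemma meet_lower1: "x \<in> C \<Longrightarrow> y \<in> C \<Longrightarrow> x \<sqinter> y \<preceq> x"
  using meet_assoc[of x y x] meet_commute[of y x] meet_assoc[of x x y] by (simp add: le_iff_meet)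

lemma meet_lower2: "x \<in> C \<Longrightarrow> y \<in> C \<Longrightarrow> x \<sqinter> y \<preceq> y"
  using meet_lower1[of y x] meet_commute[of x y] by simp

lemma le_meet_iff: "x \<in> C \<Longrightarrow> y \<in> C \<Longrightarrow> z \<in> C \<Longrightarrow> z \<preceq> x \<sqinter> y \<longleftrightarrow> z \<preceq> x \<and> z \<preceq> y"
  using meet_assoc[of z x y] le_trans[of z "x \<sqinter> y" x] le_trans[of z "x \<sqinter> y" y]
    meet_lower1[of x y] meet_lower2[of x y]
  by (auto simp: le_iff_meet)

lemma join_upper1: "x \<in> C \<Longrightarrow> y \<in> C \<Longrightarrow> x \<preceq> x \<squnion> y"
  by (simp add: le_iff_meet meet_join_absorb)

lemma join_upper2: "x \<in> C \<Longrightarrow> y \<in> C \<Longrightarrow> y \<preceq> x \<squnion> y"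
  using join_upper1[of y x] join_commute[of x y] by simp

lemma join_le_iff: "x \<in> C \<Longrightarrow> y \<in> C \<Longrightarrow> z \<in> C \<Longrightarrow> x \<squnion> y \<preceq> z \<longleftrightarrow> x \<preceq> z \<and> y \<preceq> z"
  using join_assoc[of x y z] le_trans[of x "x \<squnion> y" z] le_trans[of y "x \<squnion> y" z]
    join_upper1[of x y] join_upper2[of x y]
  by (auto simp: le_iff_join)

lemma meet_absorb1: "x \<in> C \<Longrightarrow> y \<in> C \<Longrightarrow> x \<preceq> y \<Longrightarrow> x \<sqinter> y = x"
  by (simp add: le_iff_meet)

lemma meet_absorb2: "x \<in> C \<Longrightarrow> y \<in> C \<Longrightarrow> y \<preceq> x \<Longrightarrow> x \<sqinter> y = y"
  using meet_commute[of x y] by (simp add: le_iff_meet)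

lemma join_absorb1: "x \<in> C \<Longrightarrow> y \<in> C \<Longrightarrow> y \<preceq> x \<Longrightarrow> x \<squnion> y = x"
  using join_commute[of x y] by (simp add: le_iff_join)

lemma join_absorb2: "x \<in> C \<Longrightarrow> y \<in> C \<Longrightarrow> x \<preceq> y \<Longrightarrow> x \<squnion> y = y"
  by (simp add: le_iff_join)

lemma eq_iff_same_lower_bounds:
  "u \<in> C \<Longrightarrow> v \<in> C \<Longrightarrow> (\<And>w. w \<in> C \<Longrightarrow> w \<preceq> u \<longleftrightarrow> w \<preceq> v) \<Longrightarrow> u = v"
  using le_antisym le_refl by blast

lemma eq_iff_same_upper_bounds:
  "u \<in> C \<Longrightarrow> v \<in> C \<Longrightarrow> (\<And>w. w \<in> C \<Longrightarrow> u \<preceq> w \<longleftrightarrow> v \<preceq> w) \<Longrightarrow> u = v"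
  using le_antisym le_refl by blast

lemma top_mult [simp]: "x \<in> C \<Longrightarrow> \<one> \<odot> x = x"
  using mult_commute[of \<one> x] by simp

lemma mult_mono_right: "x \<in> C \<Longrightarrow> y \<in> C \<Longrightarrow> z \<in> C \<Longrightarrow> x \<preceq> y \<Longrightarrow> z \<odot> x \<preceq> z \<odot> y"
  using mult_mono_left[of x y z] mult_commute[of z] by simp

lemma mult_le_left: "x \<in> C \<Longrightarrow> y \<in> C \<Longrightarrow> x \<odot> y \<preceq> x"
  using mult_mono_right[of y \<one> x] by simp

lemma mult_le_right: "x \<in> C \<Longrightarrow> y \<in> C \<Longrightarrow> x \<odot> y \<preceq> y"
  using mult_le_left[of y x] mult_commute[of x y] by simp

lemma mult_le_meet: "x \<in> C \<Longrightarrow> y \<in> C \<Longrightarrow> x \<odot> y \<preceq> x \<sqinter> y"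
  by (simp add: le_meet_iff mult_le_left mult_le_right)

lemma mult_bot [simp]: "x \<in> C \<Longrightarrow> x \<odot> \<zero> = \<zero>"
  using mult_le_right[of x \<zero>] le_antisym[of "x \<odot> \<zero>" \<zero>] by simp

lemma bot_mult [simp]: "x \<in> C \<Longrightarrow> \<zero> \<odot> x = \<zero>"
  using mult_commute[of \<zero> x] by simp

lemma modus_ponens: "x \<in> C \<Longrightarrow> y \<in> C \<Longrightarrow> x \<odot> (x \<rightharpoonup> y) \<preceq> y"
  using residuation[of x y "x \<rightharpoonup> y"] by simp

lemma le_imp: "x \<in> C \<Longrightarrow> y \<in> C \<Longrightarrow> y \<preceq> x \<rightharpoonup> y"
  by (simp add: mult_le_right residuation)

lemma imp_eq_top_iff: "x \<in> C \<Longrightarrow> y \<in> C \<Longrightarrow> x \<rightharpoonup> y = \<one> \<longleftrightarrow> x \<preceq> y"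
  using residuation[of x y \<one>] le_antisym[of "x \<rightharpoonup> y" \<one>] by auto

lemma imp_self [simp]: "x \<in> C \<Longrightarrow> x \<rightharpoonup> x = \<one>"
  by (simp add: imp_eq_top_iff)

lemma top_imp [simp]: "x \<in> C \<Longrightarrow> \<one> \<rightharpoonup> x = x"
  using modus_ponens[of \<one> x] le_imp[of \<one> x] le_antisym[of "\<one> \<rightharpoonup> x" x] by simp

lemma imp_antimono_left:
  assumes "x \<in> C" "y \<in> C" "z \<in> C" "x \<preceq> y"
  shows "y \<rightharpoonup> z \<preceq> x \<rightharpoonup> z"
proof -
  have "x \<odot> (y \<rightharpoonup> z) \<preceq> y \<odot> (y \<rightharpoonup> z)"
    using assms by (simp add: mult_mono_left)
  then have "x \<odot> (y \<rightharpoonup> z) \<preceq> z"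
    using assms modus_ponens[of y z] le_trans[of "x \<odot> (y \<rightharpoonup> z)" "y \<odot> (y \<rightharpoonup> z)" z] by simp
  then show ?thesis
    using assms by (simp add: residuation)
qed

lemma imp_imp: "x \<in> C \<Longrightarrow> y \<in> C \<Longrightarrow> z \<in> C \<Longrightarrow> x \<rightharpoonup> y \<rightharpoonup> z = x \<odot> y \<rightharpoonup> z"
  by (rule eq_iff_same_lower_bounds)
    (simp_all add: residuation mult_assoc[of y x] mult_commute[of y x] mult_assoc[of x y])

lemma imp_meet: "x \<in> C \<Longrightarrow> y \<in> C \<Longrightarrow> z \<in> C \<Longrightarrow> x \<rightharpoonup> y \<sqinter> z = (x \<rightharpoonup> y) \<sqinter> (x \<rightharpoonup> z)"
  by (rule eq_iff_same_lower_bounds) (simp_all add: residuation le_meet_iff)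

lemma join_imp: "x \<in> C \<Longrightarrow> y \<in> C \<Longrightarrow> z \<in> C \<Longrightarrow> x \<squnion> y \<rightharpoonup> z = (x \<rightharpoonup> z) \<sqinter> (y \<rightharpoonup> z)"
proof (rule eq_iff_same_lower_bounds)
  fix w assume xyzw: "x \<in> C" "y \<in> C" "z \<in> C" "w \<in> C"
  have "w \<preceq> x \<squnion> y \<rightharpoonup> z \<longleftrightarrow> x \<squnion> y \<preceq> w \<rightharpoonup> z"
    using xyzw residuation[of "x \<squnion> y" z w] residuation[of w z "x \<squnion> y"] mult_commute[of w "x \<squnion> y"]
    by simp
  also have "\<dots> \<longleftrightarrow> x \<preceq> w \<rightharpoonup> z \<and> y \<preceq> w \<rightharpoonup> z"
    using xyzw by (simp add: join_le_iff)
  also have "\<dots> \<longleftrightarrow> w \<preceq> (x \<rightharpoonup> z) \<sqinter> (y \<rightharpoonup> z)"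
    using xyzw by (simp add: le_meet_iff residuation mult_commute[of w])
  finally show "w \<preceq> x \<squnion> y \<rightharpoonup> z \<longleftrightarrow> w \<preceq> (x \<rightharpoonup> z) \<sqinter> (y \<rightharpoonup> z)" .
qed simp_all

lemma le_if_meet_bot_join_top:
  assumes "a \<in> C" "b \<in> C" "c \<in> C" "a \<sqinter> c = \<zero>" "b \<squnion> c = \<one>"
  shows "a \<preceq> b"
proof -
  have "a \<odot> c \<preceq> b"
    using assms mult_le_meet[of a c] le_trans[of "a \<odot> c" \<zero> b] by simp
  then have "c \<preceq> a \<rightharpoonup> b"
    using assms by (simp add: residuation)
  then have "b \<squnion> c \<preceq> a \<rightharpoonup> b"
    using assms join_le_iff[of b c "a \<rightharpoonup> b"] le_imp[of a b] by simp
  then show ?thesis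
    using assms le_antisym[of "a \<rightharpoonup> b" \<one>] by (simp add: imp_eq_top_iff[symmetric])
qed

end

section \<open>BL-algebras and MV-algebras\<close>

locale BL = residuated +
  assumes prelinearity: "x \<in> C \<Longrightarrow> y \<in> C \<Longrightarrow> (x \<rightharpoonup> y) \<squnion> (y \<rightharpoonup> x) = \<one>"
    and divisibility: "x \<in> C \<Longrightarrow> y \<in> C \<Longrightarrow> x \<odot> (x \<rightharpoonup> y) = x \<sqinter> y"
begin

lemma idempotent_mult_eq_meet:
  assumes "e \<in> C" "x \<in> C" "e \<odot> e = e"
  shows "e \<odot> x = e \<sqinter> x"
proof -
  have "e \<sqinter> x = e \<odot> (e \<odot> (e \<rightharpoonup> x))"
    using assms divisibility mult_assoc[of e e "e \<rightharpoonup> x"] by simp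
  also have "\<dots> = e \<odot> (e \<sqinter> x)"
    using assms divisibility by simp
  also have "\<dots> \<preceq> e \<odot> x"
    using assms by (simp add: meet_lower2 mult_mono_right)
  finally show ?thesis
    using assms by (simp add: le_antisym mult_le_meet)
qed

text \<open>An idempotent splits the algebra ordinally: below it, it acts as a unit, and
  everything above it acts as a unit on the elements below it.\<close>

lemma mult_eq_left_if_le_idempotent:
  assumes "e \<in> C" "x \<in> C" "y \<in> C" "e \<odot> e = e" "x \<preceq> e" "e \<preceq> y"
  shows "x \<odot> y = x"
proof -
  have x: "x = e \<odot> (e \<rightharpoonup> x)"
    using assms divisibility[of e x] meet_absorb2[of e x] by simp
  have "x \<odot> y = (e \<rightharpoonup> x) \<odot> (e \<odot> y)"
    by (subst x) (metis assms(1,2,3) imp_closed mult_assoc mult_commute)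
  also have "e \<odot> y = e"
    using assms idempotent_mult_eq_meet[of e y] meet_absorb1[of e y] by simp
  finally show ?thesis
    using assms x mult_commute[of e "e \<rightharpoonup> x"] by simp
qed

lemma chain_if_unique_coatom:
  assumes "c \<in> C" "c \<noteq> \<one>" and below_c: "\<And>x. x \<in> C \<Longrightarrow> x \<noteq> \<one> \<Longrightarrow> x \<preceq> c"
    and "x \<in> C" "y \<in> C"
  shows "x \<preceq> y \<or> y \<preceq> x"
proof (rule ccontr)
  assume "\<not> (x \<preceq> y \<or> y \<preceq> x)"
  then have "x \<rightharpoonup> y \<preceq> c" "y \<rightharpoonup> x \<preceq> c"
    using assms by (simp_all add: below_c imp_eq_top_iff)
  then have "\<one> \<preceq> c"
    using assms prelinearity[of x y] join_le_iff[of "x \<rightharpoonup> y" "y \<rightharpoonup> x" c] by simp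
  then show False
    using assms le_antisym by simp
qed

end

locale MV = residuated +
  assumes double_imp_comm: "x \<in> C \<Longrightarrow> y \<in> C \<Longrightarrow> (x \<rightharpoonup> y) \<rightharpoonup> y = (y \<rightharpoonup> x) \<rightharpoonup> x"
begin

abbreviation neg ("\<sim>") where "\<sim> x \<equiv> x \<rightharpoonup> \<zero>"

lemma join_eq_double_imp:
  assumes "x \<in> C" "y \<in> C"
  shows "x \<squnion> y = (x \<rightharpoonup> y) \<rightharpoonup> y"
proof (rule le_antisym)
  have "x \<preceq> (x \<rightharpoonup> y) \<rightharpoonup> y"
    using assms residuation[of "x \<rightharpoonup> y" y x] modus_ponens[of x y] mult_commute[of "x \<rightharpoonup> y" x]
    by simp
  then show "x \<squnion> y \<preceq> (x \<rightharpoonup> y) \<rightharpoonup> y"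
    using assms by (simp add: join_le_iff le_imp)
  have "(x \<rightharpoonup> y) \<rightharpoonup> y \<preceq> (x \<squnion> y \<rightharpoonup> y) \<rightharpoonup> y"
    using assms by (simp add: imp_antimono_left join_upper1)
  also have "\<dots> = (y \<rightharpoonup> x \<squnion> y) \<rightharpoonup> x \<squnion> y"
    using assms double_imp_comm by simp
  also have "\<dots> = x \<squnion> y"
    using assms by (simp add: imp_eq_top_iff[THEN iffD2] join_upper2)
  finally show "(x \<rightharpoonup> y) \<rightharpoonup> y \<preceq> x \<squnion> y"
    using assms by simp
qed (use assms in simp_all)

lemma neg_neg [simp]: "x \<in> C \<Longrightarrow> \<sim> (\<sim> x) = x"
  using join_eq_double_imp[of x \<zero>] join_absorb1[of x \<zero>] by simp

lemma imp_neg_neg: "x \<in> C \<Longrightarrow> y \<in> C \<Longrightarrow> \<sim> x \<rightharpoonup> \<sim> y = y \<rightharpoonup> x"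
  by (metis bot_closed imp_closed imp_imp mult_commute neg_neg)

lemma neg_le_neg_iff: "x \<in> C \<Longrightarrow> y \<in> C \<Longrightarrow> \<sim> x \<preceq> \<sim> y \<longleftrightarrow> y \<preceq> x"
  by (metis bot_closed imp_closed imp_eq_top_iff imp_neg_neg)

lemma neg_join_neg: "x \<in> C \<Longrightarrow> y \<in> C \<Longrightarrow> \<sim> (\<sim> x \<squnion> \<sim> y) = x \<sqinter> y"
proof (rule eq_iff_same_lower_bounds)
  fix w assume xyw: "x \<in> C" "y \<in> C" "w \<in> C"
  have "w \<preceq> \<sim> (\<sim> x \<squnion> \<sim> y) \<longleftrightarrow> \<sim> x \<squnion> \<sim> y \<preceq> \<sim> w"
    using xyw neg_le_neg_iff[of "\<sim> (\<sim> x \<squnion> \<sim> y)" w] by simp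
  also have "\<dots> \<longleftrightarrow> w \<preceq> x \<sqinter> y"
    using xyw by (simp add: join_le_iff neg_le_neg_iff le_meet_iff)
  finally show "w \<preceq> \<sim> (\<sim> x \<squnion> \<sim> y) \<longleftrightarrow> w \<preceq> x \<sqinter> y" .
qed simp_all

lemma divisibility: "x \<in> C \<Longrightarrow> y \<in> C \<Longrightarrow> x \<odot> (x \<rightharpoonup> y) = x \<sqinter> y"
proof -
  assume xy: "x \<in> C" "y \<in> C"
  have "y \<sqinter> x = \<sim> (\<sim> y \<squnion> \<sim> x)"
    using xy neg_join_neg by simp
  also have "\<sim> y \<squnion> \<sim> x = (x \<rightharpoonup> y) \<rightharpoonup> \<sim> x"
    using xy join_eq_double_imp imp_neg_neg by simp
  also have "\<sim> ((x \<rightharpoonup> y) \<rightharpoonup> \<sim> x) = (x \<rightharpoonup> y) \<odot> x"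
    using xy imp_imp[of "x \<rightharpoonup> y" x \<zero>] by simp
  finally show ?thesis
    using xy mult_commute meet_commute by simp
qed

lemma prelinearity: "x \<in> C \<Longrightarrow> y \<in> C \<Longrightarrow> (x \<rightharpoonup> y) \<squnion> (y \<rightharpoonup> x) = \<one>"
proof -
  assume xy: "x \<in> C" "y \<in> C"
  let ?m = "x \<sqinter> y" and ?u = "(x \<rightharpoonup> y) \<squnion> (y \<rightharpoonup> x)"
  have m: "?m \<in> C" "?m \<preceq> x" "?m \<preceq> y"
    using xy by (simp_all add: meet_lower1 meet_lower2)
  have imp_meet_self: "a \<rightharpoonup> b = a \<rightharpoonup> a \<sqinter> b" if "a \<in> C" "b \<in> C" for a b
    using that imp_meet[of a a b] meet_absorb2[of \<one> "a \<rightharpoonup> b"] by simp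
  have "(x \<rightharpoonup> y) \<rightharpoonup> ?m = (x \<rightharpoonup> ?m) \<rightharpoonup> ?m"
    using xy imp_meet_self[of x y] by simp
  also have "\<dots> = (?m \<rightharpoonup> x) \<rightharpoonup> x"
    using xy m double_imp_comm by simp
  also have "\<dots> = x"
    using xy m by (simp add: imp_eq_top_iff[THEN iffD2])
  finally have 1: "(x \<rightharpoonup> y) \<rightharpoonup> ?m = x" .
  have "(y \<rightharpoonup> x) \<rightharpoonup> ?m = (y \<rightharpoonup> ?m) \<rightharpoonup> ?m"
    using xy imp_meet_self[of y x] meet_commute[of x y] by simp
  also have "\<dots> = (?m \<rightharpoonup> y) \<rightharpoonup> y"
    using xy m double_imp_comm by simp
  also have "\<dots> = y"
    using xy m by (simp add: imp_eq_top_iff[THEN iffD2])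
  finally have 2: "(y \<rightharpoonup> x) \<rightharpoonup> ?m = y" .
  have "?u \<rightharpoonup> ?m = ?m"
    using xy 1 2 join_imp[of "x \<rightharpoonup> y" "y \<rightharpoonup> x" ?m] by simp
  moreover have "?m \<preceq> ?u"
    using xy m le_imp[of x y] join_upper1[of "x \<rightharpoonup> y" "y \<rightharpoonup> x"]
    by (meson imp_closed join_closed le_trans)
  ultimately show ?thesis
    using xy m join_eq_double_imp[of ?u ?m] join_absorb1[of ?u ?m] by simp
qed

lemma idempotent_join_neg:
  assumes "x \<in> C" "x \<odot> x = x"
  shows "x \<squnion> \<sim> x = \<one>"
  using assms join_eq_double_imp[of x "\<sim> x"] imp_imp[of x x \<zero>] by simp

lemma idempotent_eq_bot_or_top:
  assumes "x \<in> C" "x \<odot> x = x" and comparable: "x \<preceq> \<sim> x \<or> \<sim> x \<preceq> x"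
  shows "x = \<zero> \<or> x = \<one>"
proof -
  have "x \<squnion> \<sim> x = \<one>"
    using assms idempotent_join_neg by blast
  then have "\<sim> x = \<one> \<or> x = \<one>"
    using assms join_absorb1[of x "\<sim> x"] join_absorb2[of x "\<sim> x"] by auto
  then show ?thesis
    using assms imp_eq_top_iff[of x \<zero>] le_antisym[of x \<zero>] by auto
qed

end

sublocale MV \<subseteq> BL
  by unfold_locales (simp_all add: prelinearity divisibility)

lemma BL_algebra_iff_BL: "BL_algebra A \<longleftrightarrow> BL A"
  unfolding BL_algebra_def BL_def BL_axioms_def residuated_def by blast

lemma MV_algebra_iff_MV: "MV_algebra A \<longleftrightarrow> MV A"
  unfolding MV_algebra_def MV_def MV_axioms_def residuated_def by blast

lemma BL_algebra_if_MV_algebra: "MV_algebra A \<Longrightarrow> BL_algebra A"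
  unfolding MV_algebra_iff_MV BL_algebra_iff_BL using MV.axioms BL_axioms.intro MV.divisibility MV.prelinearity
  by (metis BL.intro)

definition rl_chain :: "'a rlat \<Rightarrow> bool" where
  "rl_chain A \<longleftrightarrow> (\<forall>x\<in>rl_car A. \<forall>y\<in>rl_car A. rl_le A x y \<or> rl_le A y x)"

lemma rl_iso_if_order_mult:
  assumes A: "residuated_lattice A" and B: "residuated_lattice B"
    and bij: "bij_betw f (rl_car A) (rl_car B)"
    and order: "\<And>x y. x \<in> rl_car A \<Longrightarrow> y \<in> rl_car A \<Longrightarrow> rl_le B (f x) (f y) \<longleftrightarrow> rl_le A x y"
    and mult: "\<And>x y. x \<in> rl_car A \<Longrightarrow> y \<in> rl_car A \<Longrightarrow> f (rl_mult A x y) = rl_mult B (f x) (f y)"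
  shows "rl_iso f A B"
proof -
  interpret A: residuated A by (rule residuated.intro) (rule A)
  interpret B: residuated B by (rule residuated.intro) (rule B)
  have f_closed: "\<And>x. x \<in> rl_car A \<Longrightarrow> f x \<in> rl_car B"
    using bij by (meson bij_betw_apply)
  have onto: "\<And>w. w \<in> rl_car B \<Longrightarrow> \<exists>z\<in>rl_car A. w = f z"
    using bij by (metis bij_betw_imp_surj_on imageE)
  have eq_below: "u = v" if "u \<in> rl_car B" "v \<in> rl_car B"
    "\<And>z. z \<in> rl_car A \<Longrightarrow> rl_le B (f z) u \<longleftrightarrow> rl_le B (f z) v" for u v
    using that onto B.eq_iff_same_lower_bounds by metis
  have eq_above: "u = v" if "u \<in> rl_car B" "v \<in> rl_car B"
    "\<And>z. z \<in> rl_car A \<Longrightarrow> rl_le B u (f z) \<longleftrightarrow> rl_le B v (f z)" for u v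
    using that onto B.eq_iff_same_upper_bounds by metis
  have "f (rl_zero A) = rl_zero B"
    by (rule eq_above) (auto simp: f_closed order)
  moreover have "f (rl_one A) = rl_one B"
    by (rule eq_below) (auto simp: f_closed order)
  moreover have "f (rl_meet A x y) = rl_meet B (f x) (f y)" if "x \<in> rl_car A" "y \<in> rl_car A" for x y
    by (rule eq_below) (use that in \<open>auto simp: f_closed order A.le_meet_iff B.le_meet_iff\<close>)
  moreover have "f (rl_join A x y) = rl_join B (f x) (f y)" if "x \<in> rl_car A" "y \<in> rl_car A" for x y
    by (rule eq_above) (use that in \<open>auto simp: f_closed order A.join_le_iff B.join_le_iff\<close>)
  moreover have "f (rl_imp A x y) = rl_imp B (f x) (f y)" if "x \<in> rl_car A" "y \<in> rl_car A" for x y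
    by (rule eq_below) (use that in \<open>auto simp: f_closed order A.residuation B.residuation mult[symmetric]\<close>)
  ultimately show ?thesis
    unfolding rl_iso_def using bij mult by blast
qed

lemma rl_iso_le_iff:
  assumes iso: "rl_iso f A B" and A: "residuated_lattice A" and xy: "x \<in> rl_car A" "y \<in> rl_car A"
  shows "rl_le B (f x) (f y) \<longleftrightarrow> rl_le A x y"
proof -
  interpret A: residuated A by (rule residuated.intro) (rule A)
  have "inj_on f (rl_car A)"
    using iso bij_betw_imp_inj_on unfolding rl_iso_def by blast
  then have "f (rl_meet A x y) = f x \<longleftrightarrow> rl_meet A x y = x"
    using xy by (simp add: inj_on_eq_iff)
  then show ?thesis
    using iso xy unfolding rl_iso_def rl_le_def by simp
qed

lemma rl_iso_inv:
  assumes iso: "rl_iso f A B" and A: "residuated_lattice A"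
  shows "rl_iso (inv_into (rl_car A) f) B A"
proof -
  interpret A: residuated A by (rule residuated.intro) (rule A)
  let ?g = "inv_into (rl_car A) f"
  have bij: "bij_betw f (rl_car A) (rl_car B)"
    using iso unfolding rl_iso_def by blast
  have g_f: "\<And>x. x \<in> rl_car A \<Longrightarrow> ?g (f x) = x"
    using bij bij_betw_inv_into_left by fast
  have onto: "\<And>u. u \<in> rl_car B \<Longrightarrow> \<exists>x\<in>rl_car A. u = f x"
    using bij by (metis bij_betw_imp_surj_on imageE)
  have ops: "\<And>x y. x \<in> rl_car A \<Longrightarrow> y \<in> rl_car A \<Longrightarrow>
      rl_meet B (f x) (f y) = f (rl_meet A x y) \<and> rl_join B (f x) (f y) = f (rl_join A x y) \<and>
      rl_mult B (f x) (f y) = f (rl_mult A x y) \<and> rl_imp B (f x) (f y) = f (rl_imp A x y)"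
    using iso unfolding rl_iso_def by simp
  have "\<forall>u\<in>rl_car B. \<forall>v\<in>rl_car B.
      ?g (rl_meet B u v) = rl_meet A (?g u) (?g v) \<and> ?g (rl_join B u v) = rl_join A (?g u) (?g v) \<and>
      ?g (rl_mult B u v) = rl_mult A (?g u) (?g v) \<and> ?g (rl_imp B u v) = rl_imp A (?g u) (?g v)"
  proof (intro ballI)
    fix u v assume "u \<in> rl_car B" "v \<in> rl_car B"
    then obtain x y where "x \<in> rl_car A" "y \<in> rl_car A" "u = f x" "v = f y"
      using onto by blast
    then show "?g (rl_meet B u v) = rl_meet A (?g u) (?g v) \<and> ?g (rl_join B u v) = rl_join A (?g u) (?g v) \<and>
      ?g (rl_mult B u v) = rl_mult A (?g u) (?g v) \<and> ?g (rl_imp B u v) = rl_imp A (?g u) (?g v)"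
      using ops g_f by simp
  qed
  moreover have "?g (rl_zero B) = rl_zero A" "?g (rl_one B) = rl_one A"
    using iso g_f[of "rl_zero A"] g_f[of "rl_one A"] unfolding rl_iso_def by simp_all
  ultimately show ?thesis
    unfolding rl_iso_def using bij bij_betw_inv_into by blast
qed

lemma rl_isomorphic_sym: "rl_isomorphic A B \<Longrightarrow> residuated_lattice A \<Longrightarrow> rl_isomorphic B A"
  unfolding rl_isomorphic_def using rl_iso_inv by blast

lemma rl_isomorphic_trans: "rl_isomorphic A B \<Longrightarrow> rl_isomorphic B D \<Longrightarrow> rl_isomorphic A D"
  unfolding rl_isomorphic_def rl_iso_def by (auto intro: bij_betw_trans simp: bij_betw_apply)

lemma rl_isomorphic_refl: "rl_isomorphic A A"
  unfolding rl_isomorphic_def rl_iso_def by (metis bij_betw_id id_apply)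

lemma MV_algebra_if_iso:
  assumes iso: "rl_iso f A B" and A: "residuated_lattice A" and B: "MV_algebra B"
  shows "MV_algebra A"
proof -
  interpret A: residuated A by (rule residuated.intro) (rule A)
  have "inj_on f (rl_car A)" and f_closed: "\<And>x. x \<in> rl_car A \<Longrightarrow> f x \<in> rl_car B"
    using iso unfolding rl_iso_def by (auto simp: bij_betw_def)
  moreover have "f (rl_imp A (rl_imp A x y) y) = f (rl_imp A (rl_imp A y x) x)"
    if "x \<in> rl_car A" "y \<in> rl_car A" for x y
    using iso B that f_closed unfolding rl_iso_def MV_algebra_def by simp
  ultimately show ?thesis
    using A unfolding MV_algebra_def by (simp add: inj_on_eq_iff)
qed

lemma rl_chain_if_iso:
  assumes "rl_iso f A B" "residuated_lattice A" "rl_chain B"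
  shows "rl_chain A"
  using assms rl_iso_le_iff[OF assms(1,2)] unfolding rl_chain_def rl_iso_def
  by (metis bij_betw_apply)

section \<open>Ordinal decomposition at an idempotent\<close>

definition lower_part :: "'a rlat \<Rightarrow> 'a \<Rightarrow> 'a rlat" where
  "lower_part L e = L\<lparr>rl_car := {x \<in> rl_car L. rl_le L x e},
     rl_imp := (\<lambda>x y. rl_meet L (rl_imp L x y) e), rl_one := e\<rparr>"

definition upper_part :: "'a rlat \<Rightarrow> 'a \<Rightarrow> 'a rlat" where
  "upper_part L e = L\<lparr>rl_car := {x \<in> rl_car L. rl_le L e x}, rl_zero := e\<rparr>"

lemma ord_prod_simps [simp]:
  "rl_car (ord_prod L1 L2) = rl_car L1 \<union> rl_car L2"
  "rl_zero (ord_prod L1 L2) = rl_zero L1" "rl_one (ord_prod L1 L2) = rl_one L2"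
  by (simp_all add: ord_prod_def Let_def)

lemma lower_part_simps [simp]:
  "rl_car (lower_part L e) = {x \<in> rl_car L. rl_le L x e}"
  "rl_meet (lower_part L e) = rl_meet L" "rl_join (lower_part L e) = rl_join L"
  "rl_mult (lower_part L e) = rl_mult L" "rl_imp (lower_part L e) = (\<lambda>x y. rl_meet L (rl_imp L x y) e)"
  "rl_zero (lower_part L e) = rl_zero L" "rl_one (lower_part L e) = e"
  "rl_le (lower_part L e) = rl_le L"
  by (simp_all add: lower_part_def rl_le_def[abs_def])

lemma upper_part_simps [simp]:
  "rl_car (upper_part L e) = {x \<in> rl_car L. rl_le L e x}"
  "rl_meet (upper_part L e) = rl_meet L" "rl_join (upper_part L e) = rl_join L"
  "rl_mult (upper_part L e) = rl_mult L" "rl_imp (upper_part L e) = rl_imp L"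
  "rl_zero (upper_part L e) = e" "rl_one (upper_part L e) = rl_one L"
  "rl_le (upper_part L e) = rl_le L"
  by (simp_all add: upper_part_def rl_le_def[abs_def])

lemma (in residuated) BL_algebra_on_subset:
  assumes sub: "rl_car K \<subseteq> C"
    and ops: "rl_meet K = rl_meet L" "rl_join K = rl_join L" "rl_mult K = rl_mult L"
    and bounds_closed: "rl_zero K \<in> rl_car K" "rl_one K \<in> rl_car K"
    and closed: "\<And>x y. x \<in> rl_car K \<Longrightarrow> y \<in> rl_car K \<Longrightarrow>
      x \<sqinter> y \<in> rl_car K \<and> x \<squnion> y \<in> rl_car K \<and> x \<odot> y \<in> rl_car K \<and> rl_imp K x y \<in> rl_car K"
    and bounds: "\<And>x. x \<in> rl_car K \<Longrightarrow> rl_zero K \<preceq> x \<and> x \<preceq> rl_one K"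
    and unit: "\<And>x. x \<in> rl_car K \<Longrightarrow> x \<odot> rl_one K = x"
    and resid: "\<And>x y z. x \<in> rl_car K \<Longrightarrow> y \<in> rl_car K \<Longrightarrow> z \<in> rl_car K \<Longrightarrow>
      z \<preceq> rl_imp K x y \<longleftrightarrow> x \<odot> z \<preceq> y"
    and prelin: "\<And>x y. x \<in> rl_car K \<Longrightarrow> y \<in> rl_car K \<Longrightarrow>
      rl_imp K x y \<squnion> rl_imp K y x = rl_one K"
    and divis: "\<And>x y. x \<in> rl_car K \<Longrightarrow> y \<in> rl_car K \<Longrightarrow> x \<odot> rl_imp K x y = x \<sqinter> y"
  shows "BL_algebra K"
proof -
  have le: "rl_le K = rl_le L"
    using ops(1) by (simp add: rl_le_def[abs_def])
  have lattice: "\<forall>x\<in>rl_car K. \<forall>y\<in>rl_car K. x \<sqinter> y = y \<sqinter> x \<and> x \<squnion> y = y \<squnion> x"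
      "\<forall>x\<in>rl_car K. \<forall>y\<in>rl_car K. \<forall>z\<in>rl_car K.
         x \<sqinter> (y \<sqinter> z) = x \<sqinter> y \<sqinter> z \<and> x \<squnion> (y \<squnion> z) = x \<squnion> y \<squnion> z"
      "\<forall>x\<in>rl_car K. \<forall>y\<in>rl_car K. x \<sqinter> (x \<squnion> y) = x \<and> x \<squnion> (x \<sqinter> y) = x"
    using sub meet_commute join_commute apply blast
    using sub meet_assoc join_assoc apply blast
    using sub meet_join_absorb join_meet_absorb by blast
  have monoid: "\<forall>x\<in>rl_car K. \<forall>y\<in>rl_car K. x \<odot> y = y \<odot> x"
      "\<forall>x\<in>rl_car K. \<forall>y\<in>rl_car K. \<forall>z\<in>rl_car K. x \<odot> (y \<odot> z) = x \<odot> y \<odot> z"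
      "\<forall>x\<in>rl_car K. \<forall>y\<in>rl_car K. \<forall>z\<in>rl_car K. x \<preceq> y \<longrightarrow> x \<odot> z \<preceq> y \<odot> z"
    using sub mult_commute apply blast
    using sub mult_assoc apply blast
    using sub mult_mono_left by blast
  have "\<forall>x\<in>rl_car K. \<forall>y\<in>rl_car K.
      x \<sqinter> y \<in> rl_car K \<and> x \<squnion> y \<in> rl_car K \<and> x \<odot> y \<in> rl_car K \<and> rl_imp K x y \<in> rl_car K"
    "\<forall>x\<in>rl_car K. rl_zero K \<preceq> x \<and> x \<preceq> rl_one K"
    "\<forall>x\<in>rl_car K. x \<odot> rl_one K = x"
    "\<forall>x\<in>rl_car K. \<forall>y\<in>rl_car K. \<forall>z\<in>rl_car K. (z \<preceq> rl_imp K x y) = (x \<odot> z \<preceq> y)"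
    "\<forall>x\<in>rl_car K. \<forall>y\<in>rl_car K. rl_imp K x y \<squnion> rl_imp K y x = rl_one K \<and> x \<odot> rl_imp K x y = x \<sqinter> y"
    using closed bounds unit resid prelin divis by simp_all
  then show ?thesis
    unfolding BL_algebra_def residuated_lattice_def Let_def le ops
    using bounds_closed lattice monoid by (intro conjI) assumption+
qed

context BL
begin

lemma not_idempotent_le_imp:
  assumes "e \<in> C" "x \<in> C" "y \<in> C" "e \<odot> e = e" "x \<preceq> e" "\<not> x \<preceq> y"
  shows "\<not> e \<preceq> x \<rightharpoonup> y"
proof
  assume "e \<preceq> x \<rightharpoonup> y"
  then have "x \<odot> e \<preceq> y"
    using assms by (simp add: residuation)
  then show False
    using assms mult_eq_left_if_le_idempotent[of e x e] by simp
qed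

lemma imp_eq_right_if_idempotent_between:
  assumes "e \<in> C" "x \<in> C" "y \<in> C" "e \<odot> e = e" "y \<preceq> e" "e \<preceq> x" "\<not> e \<preceq> y"
    and cmp: "x \<rightharpoonup> y \<preceq> e \<or> e \<preceq> x \<rightharpoonup> y"
  shows "x \<rightharpoonup> y = y"
proof -
  have "\<not> e \<preceq> x \<rightharpoonup> y"
  proof
    assume "e \<preceq> x \<rightharpoonup> y"
    then have "x \<odot> e \<preceq> y"
      using assms by (simp add: residuation)
    moreover have "x \<odot> e = e"
      using assms idempotent_mult_eq_meet[of e x] meet_absorb1[of e x] mult_commute[of x e] by simp
    ultimately show False
      using assms by simp
  qed
  then have "(x \<rightharpoonup> y) \<odot> x = x \<rightharpoonup> y"
    using assms cmp mult_eq_left_if_le_idempotent[of e "x \<rightharpoonup> y" x] by simp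
  then have "x \<rightharpoonup> y \<preceq> y"
    using assms modus_ponens[of x y] mult_commute[of x "x \<rightharpoonup> y"] by simp
  then show ?thesis
    using assms le_imp le_antisym by simp
qed

lemma BL_algebra_upper_part:
  assumes e: "e \<in> C" "e \<odot> e = e"
  shows "BL_algebra (upper_part L e)"
proof (rule BL_algebra_on_subset)
  fix x y assume "x \<in> rl_car (upper_part L e)" "y \<in> rl_car (upper_part L e)"
  then have xy: "x \<in> C" "y \<in> C" "e \<preceq> x" "e \<preceq> y"
    by simp_all
  have "e \<preceq> x \<odot> y"
    using xy e mult_mono_left[of e x e] mult_mono_right[of e y x] le_trans[of e "x \<odot> e" "x \<odot> y"]
    by (simp add: mult_commute[of e x])
  moreover have "e \<preceq> x \<sqinter> y" "e \<preceq> x \<squnion> y" "e \<preceq> x \<rightharpoonup> y"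
    using xy e le_imp[of x y] join_upper1[of x y] le_trans[of e y "x \<rightharpoonup> y"] le_trans[of e x "x \<squnion> y"]
    by (simp_all add: le_meet_iff)
  ultimately show "x \<sqinter> y \<in> rl_car (upper_part L e) \<and> x \<squnion> y \<in> rl_car (upper_part L e) \<and>
      x \<odot> y \<in> rl_car (upper_part L e) \<and> rl_imp (upper_part L e) x y \<in> rl_car (upper_part L e)"
    using xy by simp
qed (use e in \<open>auto simp: upper_part_def residuation prelinearity divisibility\<close>)

lemma BL_algebra_lower_part:
  assumes e: "e \<in> C" "e \<odot> e = e" and cmp: "\<And>x. x \<in> C \<Longrightarrow> x \<preceq> e \<or> e \<preceq> x"
  shows "BL_algebra (lower_part L e)"
proof (rule BL_algebra_on_subset)
  fix x y assume "x \<in> rl_car (lower_part L e)" "y \<in> rl_car (lower_part L e)"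
  then have xy: "x \<in> C" "y \<in> C" "x \<preceq> e" "y \<preceq> e"
    by simp_all
  have "x \<sqinter> y \<preceq> e" "x \<squnion> y \<preceq> e" "x \<odot> y \<preceq> e" "(x \<rightharpoonup> y) \<sqinter> e \<preceq> e"
    using xy e meet_lower1[of x y] mult_le_left[of x y] le_trans[of _ x e]
    by (simp_all add: join_le_iff meet_lower2)
  then show "x \<sqinter> y \<in> rl_car (lower_part L e) \<and> x \<squnion> y \<in> rl_car (lower_part L e) \<and>
      x \<odot> y \<in> rl_car (lower_part L e) \<and> rl_imp (lower_part L e) x y \<in> rl_car (lower_part L e)"
    using xy e by (simp add: lower_part_def)
  show "rl_imp (lower_part L e) x y \<squnion> rl_imp (lower_part L e) y x = rl_one (lower_part L e)"
  proof (cases "e \<preceq> x \<rightharpoonup> y \<or> e \<preceq> y \<rightharpoonup> x")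
    case True
    then show ?thesis
      using xy e meet_absorb2 meet_lower2 join_absorb1 join_absorb2
      by (auto simp: lower_part_def)
  next
    case False
    then have "x \<rightharpoonup> y \<preceq> e" "y \<rightharpoonup> x \<preceq> e"
      using xy cmp[of "x \<rightharpoonup> y"] cmp[of "y \<rightharpoonup> x"] by auto
    then have "e = \<one>"
      using xy e prelinearity[of x y] join_le_iff[of "x \<rightharpoonup> y" "y \<rightharpoonup> x" e] le_antisym by simp
    then show ?thesis
      using xy prelinearity[of x y] by (simp add: lower_part_def meet_absorb1)
  qed
  show "x \<odot> rl_imp (lower_part L e) x y = x \<sqinter> y"
  proof (cases "x \<preceq> y")
    case True
    then show ?thesis
      using xy e mult_eq_left_if_le_idempotent[of e x e]
      by (simp add: lower_part_def imp_eq_top_iff[THEN iffD2] meet_absorb1 meet_absorb2)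
  next
    case False
    then have "x \<rightharpoonup> y \<preceq> e"
      using xy e cmp[of "x \<rightharpoonup> y"] not_idempotent_le_imp[of e x y] by auto
    then show ?thesis
      using xy e meet_absorb1[of "x \<rightharpoonup> y" e] divisibility[of x y] by (simp add: lower_part_def)
  qed
qed (use e in \<open>auto simp: lower_part_def le_meet_iff residuation mult_eq_left_if_le_idempotent\<close>)

lemma iso_ord_prod_lower_upper:
  assumes e: "e \<in> C" "e \<odot> e = e" and cmp: "\<And>x. x \<in> C \<Longrightarrow> x \<preceq> e \<or> e \<preceq> x"
  shows "rl_iso id L (ord_prod (lower_part L e) (upper_part L e))"
proof -
  let ?L1 = "lower_part L e" and ?L2 = "upper_part L e"
  have mixed: "x \<preceq> y" if "x \<in> C" "y \<in> C" "x \<preceq> e" "\<not> y \<preceq> e" for x y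
    using that e cmp[of y] le_trans[of x e y] by auto
  have le: "op_le ?L1 ?L2 x y \<longleftrightarrow> x \<preceq> y" if "x \<in> C" "y \<in> C" for x y
    using that e cmp[of x] cmp[of y] le_trans[of x e y] le_trans[of e x y]
    unfolding op_le_def by auto
  have meet: "rl_meet (ord_prod ?L1 ?L2) x y = x \<sqinter> y" if "x \<in> C" "y \<in> C" for x y
    using that mixed[of x y] mixed[of y x] cmp[of x] cmp[of y]
    by (auto simp: ord_prod_def Let_def meet_absorb1 meet_absorb2)
  have join: "rl_join (ord_prod ?L1 ?L2) x y = x \<squnion> y" if "x \<in> C" "y \<in> C" for x y
    using that mixed[of x y] mixed[of y x] cmp[of x] cmp[of y]
    by (auto simp: ord_prod_def Let_def join_absorb1 join_absorb2)
  have mult: "rl_mult (ord_prod ?L1 ?L2) x y = x \<odot> y" if "x \<in> C" "y \<in> C" for x y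
    using that e cmp[of x] cmp[of y] mult_eq_left_if_le_idempotent[of e x y]
      mult_eq_left_if_le_idempotent[of e y x] mult_commute[of x y]
    by (auto simp: ord_prod_def Let_def)
  have imp: "rl_imp (ord_prod ?L1 ?L2) x y = x \<rightharpoonup> y" if xy: "x \<in> C" "y \<in> C" for x y
  proof -
    have "rl_imp (ord_prod ?L1 ?L2) x y = (if x \<preceq> y then \<one> else if x \<preceq> e \<and> y \<preceq> e then (x \<rightharpoonup> y) \<sqinter> e
        else if e \<preceq> x \<and> e \<preceq> y then x \<rightharpoonup> y else y)"
      using xy le[of x y] by (simp add: ord_prod_def Let_def)
    also have "\<dots> = x \<rightharpoonup> y"
    proof (cases "x \<preceq> y")
      case False
      have "x \<rightharpoonup> y \<preceq> e" if "x \<preceq> e"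
        using xy e that False cmp[of "x \<rightharpoonup> y"] not_idempotent_le_imp[of e x y] by auto
      moreover have "x \<rightharpoonup> y = y" if "\<not> x \<preceq> e" "y \<preceq> e" "\<not> e \<preceq> y"
        using xy e that cmp[of x] cmp[of "x \<rightharpoonup> y"] imp_eq_right_if_idempotent_between[of e x y] by simp
      ultimately show ?thesis
        using xy e False cmp[of x] cmp[of y] mixed[of x y] meet_absorb1[of "x \<rightharpoonup> y" e] by auto
    qed (use xy in \<open>simp add: imp_eq_top_iff[THEN iffD2]\<close>)
    finally show ?thesis .
  qed
  have "rl_car (ord_prod ?L1 ?L2) = C"
    using cmp by auto
  then show ?thesis
    unfolding rl_iso_def by (simp add: meet join mult imp)
qed

theorem ordinal_decomposition:
  assumes e: "e \<in> C" "e \<odot> e = e" "e \<noteq> \<zero>" "e \<noteq> \<one>"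
    and cmp: "\<And>x. x \<in> C \<Longrightarrow> x \<preceq> e \<or> e \<preceq> x"
  shows "\<exists>L1 L2 :: 'a rlat. BL_algebra L1 \<and> BL_algebra L2 \<and> rl_zero L1 \<noteq> rl_one L1 \<and>
    rl_zero L2 \<noteq> rl_one L2 \<and> ord_prod_ok L1 L2 \<and> rl_isomorphic L (ord_prod L1 L2)"
proof -
  have "BL_algebra (lower_part L e)" "BL_algebra (upper_part L e)"
    using e cmp by (simp_all add: BL_algebra_lower_part BL_algebra_upper_part)
  moreover have "rl_isomorphic L (ord_prod (lower_part L e) (upper_part L e))"
    using e cmp iso_ord_prod_lower_upper unfolding rl_isomorphic_def by blast
  moreover have "ord_prod_ok (lower_part L e) (upper_part L e)"
    using e le_antisym by (auto simp: ord_prod_ok_def)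
  moreover have "rl_zero (lower_part L e) \<noteq> rl_one (lower_part L e)"
    "rl_zero (upper_part L e) \<noteq> rl_one (upper_part L e)"
    using e by simp_all
  ultimately show ?thesis
    by blast
qed

end

section \<open>Finite BL-chains\<close>

context BL
begin

definition mult_power :: "'a \<Rightarrow> nat \<Rightarrow> 'a" where
  "mult_power w k = ((\<odot>) w ^^ k) \<one>"

lemma mult_power_0 [simp]: "mult_power w 0 = \<one>"
  by (simp add: mult_power_def)

lemma mult_power_Suc: "mult_power w (Suc k) = w \<odot> mult_power w k"
  by (simp add: mult_power_def)

lemma mult_power_closed [simp]: "w \<in> C \<Longrightarrow> mult_power w k \<in> C"
  by (induction k) (simp_all add: mult_power_Suc)

lemma mult_power_add: "w \<in> C \<Longrightarrow> mult_power w m \<odot> mult_power w k = mult_power w (m + k)"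
  by (induction m) (simp_all add: mult_power_Suc mult_assoc[symmetric])

lemma mult_power_antimono: "w \<in> C \<Longrightarrow> i \<le> j \<Longrightarrow> mult_power w j \<preceq> mult_power w i"
proof (induction j)
  case (Suc j)
  show ?case
  proof (cases "i = Suc j")
    case False
    then have "mult_power w j \<preceq> mult_power w i"
      using Suc by simp
    then show ?thesis
      using Suc.prems mult_le_right[of w "mult_power w j"]
        le_trans[of "mult_power w (Suc j)" "mult_power w j" "mult_power w i"]
      by (simp add: mult_power_Suc)
  qed (use Suc.prems in simp)
qed simp

lemma mult_mult_power_eq: "u \<in> C \<Longrightarrow> w \<in> C \<Longrightarrow> u \<odot> w = u \<Longrightarrow> u \<odot> mult_power w k = u"
  by (induction k) (simp_all add: mult_power_Suc mult_assoc)

text \<open>In a finite algebra the powers of \<open>w\<close> stabilise at an idempotent.\<close>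

lemma exists_idempotent_between:
  assumes "finite C" "u \<in> C" "w \<in> C" "u \<odot> w = u" "w \<noteq> \<one>"
  shows "\<exists>e\<in>C. e \<odot> e = e \<and> e \<preceq> w \<and> u \<preceq> e"
proof -
  have "range (mult_power w) \<subseteq> C"
    using assms by auto
  then have "\<not> inj (mult_power w)"
    using assms(1) finite_subset finite_imageD infinite_UNIV_nat by blast
  then obtain i j where ij: "i < j" "mult_power w i = mult_power w j"
    unfolding inj_def by (metis linorder_neqE_nat)
  have step: "mult_power w (Suc i) = mult_power w i"
    using assms ij mult_power_antimono[of w "Suc i" j] mult_power_antimono[of w i "Suc i"] le_antisym
    by simp
  have stable: "mult_power w (i + m) = mult_power w i" for m
    by (induction m) (use step in \<open>simp_all add: mult_power_Suc\<close>)
  have "i \<noteq> 0"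
  proof
    assume "i = 0"
    with step assms show False
      by (simp add: mult_power_Suc)
  qed
  let ?e = "mult_power w i"
  have "?e \<odot> ?e = ?e"
    using assms mult_power_add[of w i i] stable[of i] by simp
  moreover have "?e \<preceq> w"
    using assms \<open>i \<noteq> 0\<close> mult_power_antimono[of w 1 i] by (simp add: mult_power_Suc)
  moreover have "u \<preceq> ?e"
    using assms mult_mult_power_eq[of u w i] mult_le_right[of u ?e] by simp
  ultimately show ?thesis
    using assms by auto
qed

end

locale BL_chain = BL +
  assumes finite_carrier: "finite C"
    and chain: "x \<in> C \<Longrightarrow> y \<in> C \<Longrightarrow> x \<preceq> y \<or> y \<preceq> x"
begin

definition covered_by :: "'a \<Rightarrow> 'a \<Rightarrow> bool" where
  "covered_by x y \<longleftrightarrow> x \<in> C \<and> y \<in> C \<and> x \<prec> y \<and> (\<forall>w\<in>C. x \<prec> w \<longrightarrow> \<not> w \<prec> y)"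

lemma covered_by_le_above:
  "covered_by x y \<Longrightarrow> w \<in> C \<Longrightarrow> x \<prec> w \<Longrightarrow> y \<preceq> w"
  unfolding covered_by_def using chain le_antisym by blast

lemma covered_by_le_below:
  "covered_by x y \<Longrightarrow> w \<in> C \<Longrightarrow> w \<prec> y \<Longrightarrow> w \<preceq> x"
  unfolding covered_by_def using chain le_antisym by blast

lemma exists_least:
  assumes "A \<subseteq> C" "A \<noteq> {}"
  shows "\<exists>m\<in>A. \<forall>a\<in>A. m \<preceq> a"
proof -
  have "finite A"
    using assms(1) finite_carrier finite_subset by blast
  then show ?thesis
    using assms(2,1)
  proof (induction rule: finite_ne_induct)
    case (insert x A)
    then obtain m where m: "m \<in> A" "\<forall>a\<in>A. m \<preceq> a"
      by blast
    have C: "x \<in> C" "m \<in> C" "A \<subseteq> C"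
      using insert.prems m by auto
    show ?case
    proof (cases "x \<preceq> m")
      case True
      then have "\<forall>a\<in>A. x \<preceq> a"
        using C m le_trans[of x m] by blast
      then show ?thesis
        using C by auto
    next
      case False
      then show ?thesis
        using C m chain[of x m] by auto
    qed
  qed auto
qed

lemma exists_greatest:
  assumes "A \<subseteq> C" "A \<noteq> {}"
  shows "\<exists>m\<in>A. \<forall>a\<in>A. a \<preceq> m"
proof -
  have "finite A"
    using assms(1) finite_carrier finite_subset by blast
  then show ?thesis
    using assms(2,1)
  proof (induction rule: finite_ne_induct)
    case (insert x A)
    then obtain m where m: "m \<in> A" "\<forall>a\<in>A. a \<preceq> m"
      by blast
    have C: "x \<in> C" "m \<in> C" "A \<subseteq> C"
      using insert.prems m by auto
    show ?case
    proof (cases "m \<preceq> x")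
      case True
      then have "\<forall>a\<in>A. a \<preceq> x"
        using C m le_trans[of _ m x] by blast
      then show ?thesis
        using C by auto
    next
      case False
      then show ?thesis
        using C m chain[of x m] by auto
    qed
  qed auto
qed

lemma exists_lower_cover:
  assumes "x \<in> C" "x \<noteq> \<zero>"
  obtains x' where "covered_by x' x"
proof -
  have "\<zero> \<in> {w \<in> C. w \<prec> x}"
    using assms by simp
  then obtain m where m: "m \<in> C" "m \<prec> x" and greatest: "\<And>w. w \<in> C \<Longrightarrow> w \<prec> x \<Longrightarrow> w \<preceq> m"
    using exists_greatest[of "{w \<in> C. w \<prec> x}"] by blast
  have "covered_by m x"
    unfolding covered_by_def using assms m greatest le_antisym by blast
  then show ?thesis ..
qed

lemma exists_upper_cover:
  assumes "y \<in> C" "y \<noteq> \<one>"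
  obtains y' where "covered_by y y'"
proof -
  have "\<one> \<in> {w \<in> C. y \<prec> w}"
    using assms by simp
  then obtain m where m: "m \<in> C" "y \<prec> m" and least: "\<And>w. w \<in> C \<Longrightarrow> y \<prec> w \<Longrightarrow> m \<preceq> w"
    using exists_least[of "{w \<in> C. y \<prec> w}"] by blast
  have "covered_by y m"
    unfolding covered_by_def using assms m least le_antisym by blast
  then show ?thesis ..
qed

text \<open>Multiplication by the lower cover \<open>s\<close> of an idempotent \<open>q\<close> moves every element of the
  block below \<open>q\<close> one step down: the block is a finite Lukasiewicz chain.\<close>

lemma mult_lower_cover_of_idempotent:
  assumes q: "q \<in> C" "q \<odot> q = q" and s: "covered_by s q" and yz: "covered_by y z" and "z \<preceq> q"
    and no_idempotent: "\<And>e. e \<in> C \<Longrightarrow> e \<odot> e = e \<Longrightarrow> z \<preceq> e \<Longrightarrow> e \<preceq> s \<Longrightarrow> False"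
  shows "s \<odot> z = y"
proof -
  have C: "s \<in> C" "y \<in> C" "z \<in> C" "y \<preceq> z" "y \<noteq> z"
    using s yz unfolding covered_by_def by auto
  have "s \<noteq> \<one>"
    using no_idempotent[of \<one>] C by auto
  have "s \<odot> z \<noteq> z"
  proof
    assume "s \<odot> z = z"
    then have "z \<odot> s = z"
      using C mult_commute by simp
    then obtain e where "e \<in> C" "e \<odot> e = e" "e \<preceq> s" "z \<preceq> e"
      using exists_idempotent_between[OF finite_carrier] C \<open>s \<noteq> \<one>\<close> by blast
    then show False
      using no_idempotent by blast
  qed
  then have upper: "s \<odot> z \<preceq> y"
    using C yz mult_le_right[of s z] covered_by_le_below by simp
  let ?w = "z \<rightharpoonup> y"
  have zw: "z \<odot> ?w = y"
    using C divisibility meet_absorb2 by simp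
  have "?w \<preceq> s"
  proof (rule ccontr)
    assume "\<not> ?w \<preceq> s"
    then have "q \<preceq> ?w"
      using C s chain[of ?w s] covered_by_le_above[of s q ?w] by auto
    then have "z \<odot> q \<preceq> y"
      using C q zw mult_mono_right[of q ?w z] by simp
    moreover have "z \<odot> q = z"
      using C q \<open>z \<preceq> q\<close> mult_eq_left_if_le_idempotent[of q z q] by simp
    ultimately show False
      using C le_antisym by simp
  qed
  then have "y \<preceq> s \<odot> z"
    using C zw mult_mono_right[of ?w s z] mult_commute[of z s] by simp
  then show ?thesis
    using C upper le_antisym by simp
qed

text \<open>The recursion that determines the multiplication of a finite BL-chain from its order and
  its idempotents: inside a block, \<open>x \<odot> y\<close> is unchanged when \<open>x\<close> moves one step down and \<open>y\<close> one
  step up.\<close>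

lemma mult_eq_mult_covers:
  assumes "x \<preceq> y" and x': "covered_by x' x" and y': "covered_by y y'"
    and no_idempotent: "\<And>e. e \<in> C \<Longrightarrow> e \<odot> e = e \<Longrightarrow> x \<preceq> e \<Longrightarrow> e \<preceq> y \<Longrightarrow> False"
  shows "x \<odot> y = x' \<odot> y'"
proof -
  have C: "x \<in> C" "y \<in> C" "x' \<in> C" "y' \<in> C" "x' \<preceq> x" "y \<preceq> y'" "y \<noteq> y'"
    using x' y' unfolding covered_by_def by auto
  have "\<one> \<in> {e \<in> C. e \<odot> e = e \<and> y \<preceq> e}"
    using C by simp
  then obtain q where q: "q \<in> C" "q \<odot> q = q" "y \<preceq> q"
    and least: "\<And>e. e \<in> C \<Longrightarrow> e \<odot> e = e \<Longrightarrow> y \<preceq> e \<Longrightarrow> q \<preceq> e"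
    using exists_least[of "{e \<in> C. e \<odot> e = e \<and> y \<preceq> e}"] by blast
  have "q \<noteq> y"
    using no_idempotent q assms(1) by blast
  then have "q \<noteq> \<zero>"
    using C q le_antisym[of y \<zero>] by auto
  then obtain s where s: "covered_by s q"
    using q exists_lower_cover by blast
  have no_idempotent': False if "e \<in> C" "e \<odot> e = e" "x \<preceq> e" "e \<preceq> s" for e
  proof (cases "e \<preceq> y")
    case False
    then have "q \<preceq> e"
      using that C chain[of e y] least by auto
    then show False
      using that s le_trans[of q e s] le_antisym[of q s] unfolding covered_by_def by auto
  qed (use that no_idempotent in blast)
  have "y' \<preceq> q"
    using C q \<open>q \<noteq> y\<close> y' covered_by_le_above by blast
  have "s \<odot> x = x'"
    using mult_lower_cover_of_idempotent[OF q(1,2) s x'] C q assms(1) le_trans[of x y q]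
      no_idempotent' by blast
  moreover have "s \<odot> y' = y"
    using mult_lower_cover_of_idempotent[OF q(1,2) s y' \<open>y' \<preceq> q\<close>] C assms(1)
      le_trans[of x y y'] no_idempotent' le_trans[of x y' ] by blast
  moreover have "s \<in> C"
    using s unfolding covered_by_def by simp
  ultimately show ?thesis
    using C mult_assoc[of x s y'] mult_commute[of x s] by simp
qed

definition rank :: "'a \<Rightarrow> nat" where
  "rank x = card {w \<in> C. w \<prec> x}"

lemma rank_less:
  assumes "x \<in> C" "y \<in> C" "x \<prec> y"
  shows "rank x < rank y"
proof -
  have "w \<prec> y" if "w \<in> C" "w \<prec> x" for w
    using assms that le_trans[of w x y] le_antisym[of x y] by auto
  then have "{w \<in> C. w \<prec> x} \<subset> {w \<in> C. w \<prec> y}"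
    using assms by auto
  then show ?thesis
    unfolding rank_def using finite_carrier by (simp add: psubset_card_mono)
qed

lemma rank_le_iff: "x \<in> C \<Longrightarrow> y \<in> C \<Longrightarrow> rank x \<le> rank y \<longleftrightarrow> x \<preceq> y"
  using rank_less chain by (metis le_refl nat_less_le not_le)

lemma inj_on_rank: "inj_on rank C"
  by (rule inj_onI) (metis rank_le_iff le_antisym order_refl)

lemma bij_betw_rank: "bij_betw rank C {0..<card C}"
proof -
  have "rank x < card C" if "x \<in> C" for x
  proof -
    have "{w \<in> C. w \<prec> x} \<subset> C"
      using that by auto
    then show ?thesis
      unfolding rank_def by (rule psubset_card_mono[OF finite_carrier])
  qed
  then have "rank ` C \<subseteq> {0..<card C}"
    by auto
  moreover have "card (rank ` C) = card {0..<card C}"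
    using inj_on_rank by (simp add: card_image)
  ultimately have "rank ` C = {0..<card C}"
    by (simp add: card_subset_eq)
  then show ?thesis
    using inj_on_rank by (simp add: bij_betw_def)
qed

lemma rank_bot: "rank \<zero> = 0"
proof -
  have "{w \<in> C. w \<prec> \<zero>} = {}"
    using le_antisym bot_le bot_closed by blast
  then show ?thesis
    unfolding rank_def by (simp only: card.empty)
qed

lemma rank_top: "rank \<one> = card C - 1"
proof -
  have "{w \<in> C. w \<prec> \<one>} = C - {\<one>}"
    by auto
  then show ?thesis
    unfolding rank_def using finite_carrier by simp
qed

end

lemma BL_chain_iff: "BL_chain A \<longleftrightarrow> BL_algebra A \<and> finite (rl_car A) \<and> rl_chain A"
  unfolding BL_chain_def BL_chain_axioms_def BL_algebra_iff_BL rl_chain_def by blast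

text \<open>An order isomorphism between finite BL-chains that matches their idempotents is an
  isomorphism: by \<open>BL_chain.mult_eq_mult_covers\<close> the products are determined by the order and
  the idempotents.\<close>

locale BL_chain_order_iso =
  A: BL_chain A + B: BL_chain B for A :: "'a rlat" and B :: "'b rlat" +
  fixes f :: "'a \<Rightarrow> 'b"
  assumes bij: "bij_betw f (rl_car A) (rl_car B)"
    and order: "x \<in> rl_car A \<Longrightarrow> y \<in> rl_car A \<Longrightarrow> rl_le B (f x) (f y) \<longleftrightarrow> rl_le A x y"
    and idempotent: "x \<in> rl_car A \<Longrightarrow> rl_mult B (f x) (f x) = f x \<longleftrightarrow> rl_mult A x x = x"
begin

lemma f_closed: "x \<in> rl_car A \<Longrightarrow> f x \<in> rl_car B"
  using bij by (meson bij_betw_apply)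

lemma onto: "u \<in> rl_car B \<Longrightarrow> \<exists>x\<in>rl_car A. u = f x"
  using bij by (metis bij_betw_imp_surj_on imageE)

lemma f_eq_iff: "x \<in> rl_car A \<Longrightarrow> y \<in> rl_car A \<Longrightarrow> f x = f y \<longleftrightarrow> x = y"
  using bij by (meson bij_betw_imp_inj_on inj_on_eq_iff)

lemma covered_by_image:
  assumes "A.covered_by x y"
  shows "B.covered_by (f x) (f y)"
proof -
  have xy: "x \<in> rl_car A" "y \<in> rl_car A" "rl_le A x y" "x \<noteq> y"
    and between: "\<And>w. w \<in> rl_car A \<Longrightarrow> rl_le A x w \<and> x \<noteq> w \<Longrightarrow> \<not> (rl_le A w y \<and> w \<noteq> y)"
    using assms unfolding A.covered_by_def by auto
  have "\<not> (rl_le B w' (f y) \<and> w' \<noteq> f y)"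
    if w': "w' \<in> rl_car B" and above: "rl_le B (f x) w' \<and> f x \<noteq> w'" for w'
  proof -
    obtain w where "w \<in> rl_car A" "w' = f w"
      using w' onto by blast
    then show ?thesis
      using above xy between[of w] order f_eq_iff by auto
  qed
  then show ?thesis
    unfolding B.covered_by_def using xy f_closed order f_eq_iff by auto
qed

lemma mult_image_if_le:
  assumes "x \<in> rl_car A" "y \<in> rl_car A" "rl_le A x y"
  shows "f (rl_mult A x y) = rl_mult B (f x) (f y)"
  using assms
proof (induction "card {w \<in> rl_car A. rl_le A y w \<and> y \<noteq> w}" arbitrary: x y rule: less_induct)
  case less
  show ?case
  proof (cases "\<exists>e\<in>rl_car A. rl_mult A e e = e \<and> rl_le A x e \<and> rl_le A e y")
    case True
    then obtain e where e: "e \<in> rl_car A" "rl_mult A e e = e" "rl_le A x e" "rl_le A e y"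
      by blast
    then have "rl_mult A x y = x"
      using less.prems A.mult_eq_left_if_le_idempotent by blast
    moreover have "rl_mult B (f x) (f y) = f x"
      by (rule B.mult_eq_left_if_le_idempotent[of "f e"]) (use less.prems e f_closed order idempotent in auto)
    ultimately show ?thesis
      by simp
  next
    case False
    then have "x \<noteq> rl_zero A" "y \<noteq> rl_one A"
      using less.prems by auto
    then obtain x' y' where x': "A.covered_by x' x" and y': "A.covered_by y y'"
      using less.prems A.exists_lower_cover A.exists_upper_cover by metis
    have C: "x' \<in> rl_car A" "y' \<in> rl_car A" "rl_le A x' y'"
      using x' y' less.prems A.le_trans unfolding A.covered_by_def by meson+
    have "rl_mult A x y = rl_mult A x' y'"
      using A.mult_eq_mult_covers[OF less.prems(3) x' y'] False by blast
    moreover have "rl_mult B (f x) (f y) = rl_mult B (f x') (f y')"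
    proof (rule B.mult_eq_mult_covers)
      show "rl_le B (f x) (f y)"
        using less.prems order by simp
      show "B.covered_by (f x') (f x)" "B.covered_by (f y) (f y')"
        using x' y' covered_by_image by simp_all
      show False if "e \<in> rl_car B" "rl_mult B e e = e" "rl_le B (f x) e" "rl_le B e (f y)" for e
        using that False onto less.prems order idempotent by metis
    qed
    moreover have "f (rl_mult A x' y') = rl_mult B (f x') (f y')"
    proof (rule less.hyps[OF _ C])
      have "{w \<in> rl_car A. rl_le A y' w \<and> y' \<noteq> w} \<subset> {w \<in> rl_car A. rl_le A y w \<and> y \<noteq> w}"
        using y' A.le_trans A.le_antisym unfolding A.covered_by_def by blast
      then show "card {w \<in> rl_car A. rl_le A y' w \<and> y' \<noteq> w} < card {w \<in> rl_car A. rl_le A y w \<and> y \<noteq> w}"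
        using A.finite_carrier by (simp add: psubset_card_mono)
    qed
    ultimately show ?thesis
      by simp
  qed
qed

theorem rl_iso: "rl_iso f A B"
proof (rule rl_iso_if_order_mult[OF A.residuated_lattice B.residuated_lattice bij order])
  show "f (rl_mult A x y) = rl_mult B (f x) (f y)" if "x \<in> rl_car A" "y \<in> rl_car A" for x y
    using that A.chain[of x y] mult_image_if_le[of x y] mult_image_if_le[of y x]
      A.mult_commute B.mult_commute f_closed
    by metis
qed

end

text \<open>The BL-chain on \<open>{0..<n}\<close> (top \<open>t = n - 1\<close>) whose idempotents are \<open>0\<close>, \<open>t\<close> and the elements
  of \<open>T\<close>; it is the ordinal sum of the Lukasiewicz chains on the intervals between consecutive
  idempotents. Both operations are computed by the recursion of \<open>BL_chain.mult_eq_mult_covers\<close>.\<close>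

function chain_mult :: "nat \<Rightarrow> nat set \<Rightarrow> nat \<Rightarrow> nat \<Rightarrow> nat" where
  "chain_mult t T x y =
     (if y < x then chain_mult t T y x
      else if x = 0 \<or> t \<le> y \<or> (\<exists>e\<in>T. x \<le> e \<and> e \<le> y) then x
      else chain_mult t T (x - 1) (y + 1))"
  by auto
termination
  by (relation "measure (\<lambda>(t, T, x, y). 2 * (t - y) + (if y < x then 1 else 0))") auto

function chain_imp :: "nat \<Rightarrow> nat set \<Rightarrow> nat \<Rightarrow> nat \<Rightarrow> nat" where
  "chain_imp t T x y =
     (if x \<le> y then t
      else if t \<le> x \<or> (\<exists>e\<in>T. y < e \<and> e \<le> x) then y
      else chain_imp t T (x + 1) (y + 1))"
  by auto
termination
  by (relation "measure (\<lambda>(t, T, x, y). t - x)") auto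

declare chain_mult.simps [simp del] chain_imp.simps [simp del]

definition bl_chain :: "nat \<Rightarrow> nat set \<Rightarrow> nat rlat" where
  "bl_chain n T = \<lparr>rl_car = {0..<n}, rl_meet = min, rl_join = max,
     rl_mult = chain_mult (n - 1) T, rl_imp = chain_imp (n - 1) T, rl_zero = 0, rl_one = n - 1\<rparr>"

lemma chain_mult_le: "chain_mult t T x y \<le> min x y"
  by (induction t T x y rule: chain_mult.induct) (subst chain_mult.simps; auto)

lemma chain_mult_self_iff: "chain_mult t T x x = x \<longleftrightarrow> x = 0 \<or> t \<le> x \<or> x \<in> T"
proof (cases "x = 0 \<or> t \<le> x \<or> x \<in> T")
  case False
  then have "chain_mult t T x x = chain_mult t T (x - 1) (x + 1)"
    by (subst chain_mult.simps) auto
  also have "\<dots> \<le> x - 1"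
    using chain_mult_le[of t T "x - 1" "x + 1"] by simp
  also have "\<dots> < x"
    using False by simp
  finally show ?thesis
    using False by simp
qed (subst chain_mult.simps; auto)

lemma rl_le_bl_chain [simp]: "rl_le (bl_chain n T) x y \<longleftrightarrow> x \<le> y"
  by (simp add: rl_le_def bl_chain_def min_def)

lemma bl_chain_simps [simp]:
  "rl_car (bl_chain n T) = {0..<n}" "rl_meet (bl_chain n T) = min"
  "rl_mult (bl_chain n T) = chain_mult (n - 1) T" "rl_zero (bl_chain n T) = 0" "rl_one (bl_chain n T) = n - 1"
  by (simp_all add: bl_chain_def)

lemma rl_chain_bl_chain: "rl_chain (bl_chain n T)"
  by (auto simp: rl_chain_def)

lemma BL_algebra_bl_chain:
  assumes "2 \<le> n" "n \<le> 5" "T \<subseteq> {1..<n - 1}"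
  shows "BL_algebra (bl_chain n T)"
proof -
  have "\<forall>T\<in>Pow {1..<n - 1}. BL_algebra (bl_chain n T)"
  proof -
    have "n = 2 \<or> n = 3 \<or> n = 4 \<or> n = 5"
      using assms by auto
    then show ?thesis
      unfolding BL_algebra_def residuated_lattice_def bl_chain_def rl_le_def Let_def
      by (elim disjE) (simp only:; code_simp)+
  qed
  then show ?thesis
    using assms by blast
qed

lemma MV_algebra_bl_chain_empty:
  assumes "2 \<le> n" "n \<le> 5"
  shows "MV_algebra (bl_chain n {})"
proof -
  have "n = 2 \<or> n = 3 \<or> n = 4 \<or> n = 5"
    using assms by auto
  then show ?thesis
    unfolding MV_algebra_def residuated_lattice_def bl_chain_def rl_le_def Let_def
    by (elim disjE) (simp only:; code_simp)+
qed

context BL_chain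
begin

lemma rank_eq_iff: "x \<in> C \<Longrightarrow> y \<in> C \<Longrightarrow> rank x = rank y \<longleftrightarrow> x = y"
  using inj_on_rank by (meson inj_on_eq_iff)

lemma rank_less_card: "x \<in> C \<Longrightarrow> rank x < card C"
  using bij_betw_rank by (auto dest: bij_betw_apply)

lemma rl_iso_rank_bl_chain:
  assumes "BL_algebra (bl_chain (card C) T)"
    and idempotent: "\<And>x. x \<in> C \<Longrightarrow> x \<odot> x = x \<longleftrightarrow> x = \<zero> \<or> x = \<one> \<or> rank x \<in> T"
  shows "rl_iso rank L (bl_chain (card C) T)"
proof (rule BL_chain_order_iso.rl_iso, intro BL_chain_order_iso.intro BL_chain_order_iso_axioms.intro)
  show "BL_chain L"
    by unfold_locales
  show "BL_chain (bl_chain (card C) T)"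
    using assms(1) by (simp add: BL_chain_iff rl_chain_bl_chain)
  show "bij_betw rank C (rl_car (bl_chain (card C) T))"
    using bij_betw_rank by simp
  show "rl_le (bl_chain (card C) T) (rank x) (rank y) \<longleftrightarrow> x \<preceq> y" if "x \<in> C" "y \<in> C" for x y
    using that by (simp add: rank_le_iff)
  show "rl_mult (bl_chain (card C) T) (rank x) (rank x) = rank x \<longleftrightarrow> x \<odot> x = x" if "x \<in> C" for x
  proof -
    have "rank x = 0 \<longleftrightarrow> x = \<zero>" "card C - 1 \<le> rank x \<longleftrightarrow> x = \<one>"
      using that rank_eq_iff[of x \<zero>] rank_eq_iff[of x \<one>] rank_less_card[of x] rank_bot rank_top
      by auto
    then show ?thesis
      using that idempotent by (simp add: chain_mult_self_iff)
  qed
qed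

lemma isomorphic_bl_chain:
  assumes "2 \<le> card C" "card C \<le> 5"
  obtains T where "T \<subseteq> {1..<card C - 1}" "rl_isomorphic L (bl_chain (card C) T)"
    "T = {} \<longleftrightarrow> (\<forall>x\<in>C. x \<odot> x = x \<longrightarrow> x = \<zero> \<or> x = \<one>)"
proof -
  let ?T = "rank ` {x \<in> C. x \<odot> x = x \<and> x \<noteq> \<zero> \<and> x \<noteq> \<one>}"
  have "?T \<subseteq> {1..<card C - 1}"
  proof
    fix i assume "i \<in> ?T"
    then obtain x where x: "x \<in> C" "x \<noteq> \<zero>" "x \<noteq> \<one>" "i = rank x"
      by blast
    then show "i \<in> {1..<card C - 1}"
      using rank_eq_iff[of x \<zero>] rank_eq_iff[of x \<one>] rank_less_card[of x] rank_bot rank_top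
      by auto
  qed
  moreover have "rl_iso rank L (bl_chain (card C) ?T)"
  proof (rule rl_iso_rank_bl_chain)
    show "BL_algebra (bl_chain (card C) ?T)"
      using assms calculation by (simp add: BL_algebra_bl_chain)
    show "x \<odot> x = x \<longleftrightarrow> x = \<zero> \<or> x = \<one> \<or> rank x \<in> ?T" if "x \<in> C" for x
      using that rank_eq_iff by auto
  qed
  then have "rl_isomorphic L (bl_chain (card C) ?T)"
    unfolding rl_isomorphic_def by blast
  moreover have "?T = {} \<longleftrightarrow> (\<forall>x\<in>C. x \<odot> x = x \<longrightarrow> x = \<zero> \<or> x = \<one>)"
    by blast
  ultimately show ?thesis
    using that by blast
qed

end

lemma strict_mono_self_map_eq_id:
  fixes f :: "nat \<Rightarrow> nat"
  assumes mono: "\<And>i j. i < j \<Longrightarrow> j < n \<Longrightarrow> f i < f j" and into: "\<And>i. i < n \<Longrightarrow> f i < n"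
    and "i < n"
  shows "f i = i"
proof -
  have "i \<le> f i"
    using \<open>i < n\<close>
  proof (induction i)
    case (Suc i)
    then show ?case
      using mono[of i "Suc i"] by simp
  qed simp
  moreover have "i \<le> n - 1"
    using \<open>i < n\<close> by simp
  then have "f i \<le> i"
  proof (induction rule: inc_induct)
    case base
    then show ?case
      using into[of "n - 1"] \<open>i < n\<close> by simp
  next
    case (step k)
    then have "f k < f (Suc k)"
      using mono[of k "Suc k"] by simp
    then show ?case
      using step by simp
  qed
  ultimately show ?thesis
    by simp
qed

lemma rl_iso_bl_chain_eq_id:
  assumes iso: "rl_iso f (bl_chain n T) (bl_chain n T')" and "i < n"
  shows "f i = i"
proof -
  have bij: "bij_betw f {0..<n} {0..<n}"
    and min: "\<And>i j. i < n \<Longrightarrow> j < n \<Longrightarrow> f (min i j) = min (f i) (f j)"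
    using iso unfolding rl_iso_def by auto
  have "f i < f j" if "i < j" "j < n" for i j
  proof -
    have "f i \<le> f j"
      using that min[of i j] by (simp add: min_def split: if_splits)
    moreover have "f i \<noteq> f j"
      using that bij_betw_imp_inj_on[OF bij] by (auto simp: inj_on_eq_iff)
    ultimately show ?thesis
      by simp
  qed
  moreover have "\<And>i. i < n \<Longrightarrow> f i < n"
    using bij by (auto dest: bij_betw_apply)
  ultimately show ?thesis
    using strict_mono_self_map_eq_id \<open>i < n\<close> by blast
qed

lemma bl_chain_isomorphic_imp_eq:
  assumes "T \<subseteq> {1..<n - 1}" "T' \<subseteq> {1..<n - 1}" "rl_isomorphic (bl_chain n T) (bl_chain n T')"
  shows "T = T'"
proof (rule set_eqI)
  obtain f where iso: "rl_iso f (bl_chain n T) (bl_chain n T')"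
    using assms(3) unfolding rl_isomorphic_def by blast
  fix i
  show "i \<in> T \<longleftrightarrow> i \<in> T'"
  proof (cases "1 \<le> i \<and> i < n - 1")
    case True
    then have "i < n"
      by linarith
    then have "f (chain_mult (n - 1) T i i) = chain_mult (n - 1) T' (f i) (f i)"
      using iso unfolding rl_iso_def by simp
    moreover have "chain_mult (n - 1) T i i < n"
      using \<open>i < n\<close> chain_mult_le[of "n - 1" T i i] by simp
    ultimately have "chain_mult (n - 1) T i i = chain_mult (n - 1) T' i i"
      using \<open>i < n\<close> rl_iso_bl_chain_eq_id[OF iso] by simp
    then show ?thesis
      using True chain_mult_self_iff[of "n - 1" T i] chain_mult_self_iff[of "n - 1" T' i] by auto
  qed (use assms(1,2) in auto)
qed

section \<open>Small BL-algebras that are not chains\<close>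

text \<open>The Boolean algebra \<open>2 \<times> 2\<close> on \<open>{k..<k + 4}\<close>, reading \<open>x - k\<close> as a vector of two bits.\<close>

definition boolean_square :: "nat \<Rightarrow> nat rlat" where
  "boolean_square k = \<lparr>rl_car = {k..<k + 4},
     rl_meet = (\<lambda>x y. and (x - k) (y - k) + k), rl_join = (\<lambda>x y. or (x - k) (y - k) + k),
     rl_mult = (\<lambda>x y. and (x - k) (y - k) + k), rl_imp = (\<lambda>x y. or (3 - (x - k)) (y - k) + k),
     rl_zero = k, rl_one = k + 3\<rparr>"

lemma boolean_square_simps:
  "rl_car (boolean_square k) = {k..<k + 4}"
  "rl_mult (boolean_square k) x y = and (x - k) (y - k) + k"
  "rl_le (boolean_square k) x y \<longleftrightarrow> and (x - k) (y - k) + k = x"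
  by (simp_all add: boolean_square_def rl_le_def)

definition square_with_new_bottom :: "nat rlat" where
  "square_with_new_bottom = ord_prod (bl_chain 2 {}) (boolean_square 1)"

lemma boolean_square_facts:
  "BL_algebra (boolean_square 0)" "MV_algebra (boolean_square 0)" "\<not> rl_chain (boolean_square 0)"
  "rl_car (boolean_square 0) = {0..<4}"
  unfolding BL_algebra_def MV_algebra_def residuated_lattice_def rl_chain_def boolean_square_def
    rl_le_def Let_def
  by code_simp+

lemma square_with_new_bottom_facts:
  "BL_algebra square_with_new_bottom" "\<not> MV_algebra square_with_new_bottom"
  "\<not> rl_chain square_with_new_bottom" "rl_car square_with_new_bottom = {0..<5}"
  unfolding BL_algebra_def MV_algebra_def residuated_lattice_def rl_chain_def square_with_new_bottom_def
    ord_prod_def op_le_def boolean_square_def bl_chain_def rl_le_def Let_def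
  by code_simp+

context residuated
begin

lemma isomorphic_if_enumeration:
  assumes R: "residuated_lattice R" "rl_car R = {0..<n}"
    and xs: "length xs = n" "distinct xs" "set xs = C"
    and order_mult: "\<forall>i\<in>{0..<n}. \<forall>j\<in>{0..<n}.
      (xs ! i \<preceq> xs ! j \<longleftrightarrow> rl_le R i j) \<and> xs ! rl_mult R i j = xs ! i \<odot> xs ! j"
  shows "rl_isomorphic L R"
proof -
  have "bij_betw ((!) xs) (rl_car R) C"
    using R xs by (intro bij_betw_nth) auto
  then have "rl_iso ((!) xs) R L"
    by (rule rl_iso_if_order_mult[OF R(1) residuated_lattice]) (use R order_mult in auto)
  then show ?thesis
    using rl_isomorphic_sym R(1) unfolding rl_isomorphic_def by blast
qed

lemma meet_eq_bot_if_no_common_lower_bound: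
  "x \<in> C \<Longrightarrow> y \<in> C \<Longrightarrow> (\<And>w. w \<in> C \<Longrightarrow> w \<preceq> x \<Longrightarrow> w \<preceq> y \<Longrightarrow> w = \<zero>) \<Longrightarrow> x \<sqinter> y = \<zero>"
  by (simp add: meet_lower1 meet_lower2)

lemma join_eq_top_if_no_common_upper_bound:
  "x \<in> C \<Longrightarrow> y \<in> C \<Longrightarrow> (\<And>w. w \<in> C \<Longrightarrow> x \<preceq> w \<Longrightarrow> y \<preceq> w \<Longrightarrow> w = \<one>) \<Longrightarrow> x \<squnion> y = \<one>"
  by (simp add: join_upper1 join_upper2)

lemma not_le_bot: "x \<in> C \<Longrightarrow> x \<noteq> \<zero> \<Longrightarrow> \<not> x \<preceq> \<zero>"
  using le_antisym by auto

lemma not_top_le: "x \<in> C \<Longrightarrow> x \<noteq> \<one> \<Longrightarrow> \<not> \<one> \<preceq> x"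
  using le_antisym by auto

lemma chain_if_card_le_3:
  assumes "finite C" "card C \<le> 3" "x \<in> C" "y \<in> C"
  shows "x \<preceq> y \<or> y \<preceq> x"
proof (cases "x \<in> {\<zero>, \<one>} \<or> y \<in> {\<zero>, \<one>}")
  case False
  have "\<zero> \<noteq> \<one>"
    using False assms(3) le_top[of x] le_antisym[of x \<zero>] by auto
  then have "card (C - {\<zero>, \<one>}) \<le> 1"
    using assms(1,2) card_Diff_subset[of "{\<zero>, \<one>}" C] by simp
  moreover have "x \<in> C - {\<zero>, \<one>}" "y \<in> C - {\<zero>, \<one>}"
    using False assms(3,4) by auto
  ultimately have "x = y"
    using assms(1) card_le_Suc0_iff_eq[of "C - {\<zero>, \<one>}"] by (simp only: One_nat_def finite_Diff)
  then show ?thesis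
    using assms by simp
qed (use assms in auto)

text \<open>The pentagon and the diamond are not the lattices of residuated lattices: with \<open>z\<close>
  incomparable to \<open>x\<close> and \<open>y\<close>, \<open>y \<sqinter> z = \<zero>\<close> and \<open>x \<squnion> z = \<one>\<close> force \<open>y \<preceq> x\<close>.\<close>

lemma five_element_incomparable_impossible:
  assumes C: "C = {\<zero>, x, y, z, \<one>}" "distinct [\<zero>, x, y, z, \<one>]"
    and incomparable: "\<not> x \<preceq> z" "\<not> z \<preceq> x" "\<not> y \<preceq> z" "\<not> z \<preceq> y" and "\<not> y \<preceq> x"
  shows False
proof -
  have in_C: "x \<in> C" "y \<in> C" "z \<in> C"
    using C by auto
  have "y \<sqinter> z = \<zero>"
    by (rule meet_eq_bot_if_no_common_lower_bound)
      (use C incomparable not_top_le in \<open>auto dest: le_trans[of x y z]\<close>)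
  moreover have "x \<squnion> z = \<one>"
    by (rule join_eq_top_if_no_common_upper_bound)
      (use C incomparable not_le_bot in \<open>auto dest: le_trans[of z x y]\<close>)
  ultimately show False
    using in_C le_if_meet_bot_join_top[of y x z] \<open>\<not> y \<preceq> x\<close> by simp
qed

end

context BL
begin

lemma four_element_nonchain_products:
  assumes C: "C = {\<zero>, a, b, \<one>}" "distinct [\<zero>, a, b, \<one>]" and ab: "\<not> a \<preceq> b" "\<not> b \<preceq> a"
  shows "a \<odot> a = a" "b \<odot> b = b" "a \<odot> b = \<zero>"
proof -
  have in_C: "a \<in> C" "b \<in> C"
    using C by auto
  have cases: "\<And>x. x \<in> C \<Longrightarrow> x = \<zero> \<or> x = a \<or> x = b \<or> x = \<one>"
    using C by auto
  have dist: "\<zero> \<noteq> a" "\<zero> \<noteq> b" "\<zero> \<noteq> \<one>" "a \<noteq> b" "a \<noteq> \<one>" "b \<noteq> \<one>"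
    using C by auto
  have "a \<rightharpoonup> b \<noteq> \<one>" "b \<preceq> a \<rightharpoonup> b"
    using in_C ab by (simp_all add: imp_eq_top_iff le_imp)
  then have imp_ab: "a \<rightharpoonup> b = b"
    using cases[of "a \<rightharpoonup> b"] in_C dist ab not_le_bot by auto
  have "b \<rightharpoonup> a \<noteq> \<one>" "a \<preceq> b \<rightharpoonup> a"
    using in_C ab by (simp_all add: imp_eq_top_iff le_imp)
  then have imp_ba: "b \<rightharpoonup> a = a"
    using cases[of "b \<rightharpoonup> a"] in_C dist ab not_le_bot by auto
  have "\<not> a \<odot> a \<preceq> b" "a \<odot> a \<preceq> a"
    using in_C ab imp_ab residuation[of a b a] by (simp_all add: mult_le_left)
  then show "a \<odot> a = a"
    using cases[of "a \<odot> a"] in_C dist ab not_top_le by auto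
  have "\<not> b \<odot> b \<preceq> a" "b \<odot> b \<preceq> b"
    using in_C ab imp_ba residuation[of b a b] by (simp_all add: mult_le_left)
  then show "b \<odot> b = b"
    using cases[of "b \<odot> b"] in_C dist ab not_top_le by auto
  have "a \<odot> b \<preceq> a" "a \<odot> b \<preceq> b"
    using in_C by (simp_all add: mult_le_left mult_le_right)
  then show "a \<odot> b = \<zero>"
    using cases[of "a \<odot> b"] in_C dist ab not_top_le by auto
qed

lemma four_element_nonchain_iso:
  assumes C: "C = {\<zero>, a, b, \<one>}" "distinct [\<zero>, a, b, \<one>]" and ab: "\<not> a \<preceq> b" "\<not> b \<preceq> a"
  shows "rl_isomorphic L (boolean_square 0)"
proof -
  have in_C: "a \<in> C" "b \<in> C"
    using C by auto
  have dist: "\<zero> \<noteq> a" "\<zero> \<noteq> b" "\<zero> \<noteq> \<one>" "a \<noteq> b" "a \<noteq> \<one>" "b \<noteq> \<one>"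
    using C by auto
  note products = four_element_nonchain_products[OF assms]
  show ?thesis
  proof (rule isomorphic_if_enumeration[of _ 4 "[\<zero>, a, b, \<one>]"])
    show "\<forall>i\<in>{0..<4}. \<forall>j\<in>{0..<4}.
      ([\<zero>, a, b, \<one>] ! i \<preceq> [\<zero>, a, b, \<one>] ! j \<longleftrightarrow> rl_le (boolean_square 0) i j) \<and>
      [\<zero>, a, b, \<one>] ! rl_mult (boolean_square 0) i j = [\<zero>, a, b, \<one>] ! i \<odot> [\<zero>, a, b, \<one>] ! j"
      using in_C dist ab not_le_bot not_top_le products mult_commute[of b a]
      by (simp add: atLeastLessThan_nat_numeral boolean_square_simps)
  qed (use C boolean_square_facts in \<open>simp_all add: BL_algebra_def\<close>)
qed

lemma five_element_nonchain_shape: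
  assumes C: "C = {\<zero>, a, b, c, \<one>}" "distinct [\<zero>, a, b, c, \<one>]" and ab: "\<not> a \<preceq> b" "\<not> b \<preceq> a"
  shows "c \<preceq> a \<and> c \<preceq> b"
proof -
  have in_C: "a \<in> C" "b \<in> C" "c \<in> C"
    using C by auto
  have comparable: "c \<preceq> x \<or> x \<preceq> c" if "x = a \<and> y = b \<or> x = b \<and> y = a" for x y
  proof (rule ccontr)
    assume incomparable: "\<not> (c \<preceq> x \<or> x \<preceq> c)"
    have "\<not> y \<preceq> c \<or> \<not> c \<preceq> y"
      using that in_C C le_antisym[of y c] by auto
    then show False
    proof
      assume "\<not> y \<preceq> c"
      then show False
        using five_element_incomparable_impossible[of c y x] C that ab incomparable by auto
    next
      assume "\<not> c \<preceq> y"
      then show False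
        using five_element_incomparable_impossible[of y c x] C that ab incomparable by auto
    qed
  qed
  have "\<not> (a \<preceq> c \<and> b \<preceq> c)"
  proof
    assume "a \<preceq> c \<and> b \<preceq> c"
    then have "\<And>x. x \<in> C \<Longrightarrow> x \<noteq> \<one> \<Longrightarrow> x \<preceq> c"
      using C by auto
    then show False
      using chain_if_unique_coatom[of c a b] in_C C ab by auto
  qed
  then show ?thesis
    using comparable[of a b] comparable[of b a] in_C ab le_trans[of a c b] le_trans[of b c a] by auto
qed

context
  fixes a b c
  assumes five: "C = {\<zero>, c, a, b, \<one>}" "distinct [\<zero>, c, a, b, \<one>]"
    and shape: "c \<preceq> a" "c \<preceq> b" "\<not> a \<preceq> b" "\<not> b \<preceq> a"
begin

lemma five_element_nonchain_residua: "a \<odot> b = c" "a \<rightharpoonup> c = b" "b \<rightharpoonup> c = a"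
proof -
  have in_C: "a \<in> C" "b \<in> C" "c \<in> C" and cases: "\<And>x. x \<in> C \<Longrightarrow> x = \<zero> \<or> x = c \<or> x = a \<or> x = b \<or> x = \<one>"
    using five by auto
  have dist: "\<zero> \<noteq> c" "\<zero> \<noteq> a" "\<zero> \<noteq> b" "c \<noteq> a" "c \<noteq> b" "a \<noteq> b" "c \<noteq> \<one>" "a \<noteq> \<one>" "b \<noteq> \<one>"
    using five by auto
  have not_below_c: "\<not> a \<preceq> c" "\<not> b \<preceq> c"
    using in_C shape dist le_antisym by auto
  have "a \<sqinter> b \<preceq> a" "a \<sqinter> b \<preceq> b" "c \<preceq> a \<sqinter> b"
    using in_C shape by (simp_all add: meet_lower1 meet_lower2 le_meet_iff)
  then have meet_ab: "a \<sqinter> b = c"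
    using cases[of "a \<sqinter> b"] in_C dist shape not_le_bot not_top_le by auto
  have "a \<rightharpoonup> b \<noteq> \<one>" "b \<preceq> a \<rightharpoonup> b"
    using in_C shape by (simp_all add: imp_eq_top_iff le_imp)
  then have "a \<rightharpoonup> b = b"
    using cases[of "a \<rightharpoonup> b"] in_C dist shape not_le_bot not_below_c by auto
  then show mult_ab: "a \<odot> b = c"
    using in_C meet_ab divisibility[of a b] by simp
  have "a \<rightharpoonup> c \<noteq> \<one>" "b \<preceq> a \<rightharpoonup> c"
    using in_C mult_ab not_below_c by (simp_all add: imp_eq_top_iff residuation)
  then show "a \<rightharpoonup> c = b"
    using cases[of "a \<rightharpoonup> c"] in_C dist shape not_le_bot not_below_c by auto
  have "b \<rightharpoonup> c \<noteq> \<one>" "a \<preceq> b \<rightharpoonup> c"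
    using in_C mult_ab mult_commute[of a b] not_below_c by (simp_all add: imp_eq_top_iff residuation)
  then show "b \<rightharpoonup> c = a"
    using cases[of "b \<rightharpoonup> c"] in_C dist shape not_le_bot not_below_c by auto
qed

lemma five_element_nonchain_products:
  "a \<odot> a = a" "b \<odot> b = b" "c \<odot> a = c" "c \<odot> b = c" "c \<odot> c = c"
proof -
  have in_C: "a \<in> C" "b \<in> C" "c \<in> C" and cases: "\<And>x. x \<in> C \<Longrightarrow> x = \<zero> \<or> x = c \<or> x = a \<or> x = b \<or> x = \<one>"
    using five by auto
  have dist: "c \<noteq> a" "c \<noteq> b" "a \<noteq> \<one>" "b \<noteq> \<one>"
    using five by auto
  note residua = five_element_nonchain_residua
  have "\<not> a \<odot> a \<preceq> c" "a \<odot> a \<preceq> a"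
    using in_C shape residua residuation[of a c a] by (simp_all add: mult_le_left)
  then show mult_aa: "a \<odot> a = a"
    using cases[of "a \<odot> a"] in_C dist shape not_top_le by auto
  have "\<not> b \<odot> b \<preceq> c" "b \<odot> b \<preceq> b"
    using in_C shape residua residuation[of b c b] by (simp_all add: mult_le_left)
  then show mult_bb: "b \<odot> b = b"
    using cases[of "b \<odot> b"] in_C dist shape not_top_le by auto
  show "c \<odot> a = c" "c \<odot> b = c"
    using in_C shape mult_aa mult_bb mult_eq_left_if_le_idempotent[of a c a]
      mult_eq_left_if_le_idempotent[of b c b] by simp_all
  then show "c \<odot> c = c"
    using in_C mult_assoc[of c a b] residua by simp
qed

lemma five_element_nonchain_iso: "rl_isomorphic L square_with_new_bottom"
proof (rule isomorphic_if_enumeration[of _ 5 "[\<zero>, c, a, b, \<one>]"])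
  have in_C: "a \<in> C" "b \<in> C" "c \<in> C"
    and dist: "\<zero> \<noteq> c" "\<zero> \<noteq> a" "\<zero> \<noteq> b" "\<zero> \<noteq> \<one>" "c \<noteq> a" "c \<noteq> b" "a \<noteq> \<one>" "b \<noteq> \<one>" "c \<noteq> \<one>"
    using five by auto
  have not_below_c: "\<not> a \<preceq> c" "\<not> b \<preceq> c"
    using in_C shape dist le_antisym by auto
  show "\<forall>i\<in>{0..<5}. \<forall>j\<in>{0..<5}.
    ([\<zero>, c, a, b, \<one>] ! i \<preceq> [\<zero>, c, a, b, \<one>] ! j \<longleftrightarrow> rl_le square_with_new_bottom i j) \<and>
    [\<zero>, c, a, b, \<one>] ! rl_mult square_with_new_bottom i j = [\<zero>, c, a, b, \<one>] ! i \<odot> [\<zero>, c, a, b, \<one>] ! j"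
    unfolding rl_le_def[of square_with_new_bottom]
    using in_C dist shape not_below_c not_le_bot not_top_le five_element_nonchain_residua(1)
      five_element_nonchain_products mult_commute[of b a] mult_commute[of a c] mult_commute[of b c]
    by (simp add: atLeastLessThan_nat_numeral square_with_new_bottom_def ord_prod_def Let_def
        boolean_square_def bl_chain_def chain_mult.simps)
qed (use five square_with_new_bottom_facts in \<open>simp_all add: BL_algebra_def\<close>)

end

lemma incomparable_distinct:
  assumes "a \<in> C" "b \<in> C" "\<not> a \<preceq> b" "\<not> b \<preceq> a"
  shows "distinct [\<zero>, a, b, \<one>]"
proof -
  have "\<zero> \<noteq> \<one>"
  proof
    assume "\<zero> = \<one>"
    then have "\<one> \<preceq> b"
      using assms bot_le[of b] by simp
    then show False
      using assms le_trans[of a \<one> b] by simp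
  qed
  then show ?thesis
    using assms by auto
qed

lemma obtain_incomparable:
  assumes "\<not> rl_chain L"
  obtains a b where "a \<in> C" "b \<in> C" "\<not> a \<preceq> b" "\<not> b \<preceq> a"
  using assms unfolding rl_chain_def by blast

lemma nonchain_card_4_iso:
  assumes "finite C" "card C = 4" "\<not> rl_chain L"
  shows "rl_isomorphic L (boolean_square 0)"
proof -
  obtain a b where ab: "a \<in> C" "b \<in> C" "\<not> a \<preceq> b" "\<not> b \<preceq> a"
    using assms(3) obtain_incomparable by blast
  then have distinct: "distinct [\<zero>, a, b, \<one>]"
    by (rule incomparable_distinct)
  have "{\<zero>, a, b, \<one>} = C"
    using ab distinct assms(1,2) by (intro card_subset_eq) (auto simp: card_insert_if)
  then show ?thesis
    using four_element_nonchain_iso[OF _ distinct ab(3,4)] by simp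
qed

lemma nonchain_card_5:
  assumes "finite C" "card C = 5" "\<not> rl_chain L"
  obtains c where "c \<in> C" "c \<odot> c = c" "c \<noteq> \<zero>" "c \<noteq> \<one>" "\<And>x. x \<in> C \<Longrightarrow> x \<preceq> c \<or> c \<preceq> x"
    "rl_isomorphic L square_with_new_bottom"
proof -
  obtain a b where ab: "a \<in> C" "b \<in> C" "\<not> a \<preceq> b" "\<not> b \<preceq> a"
    using assms(3) obtain_incomparable by blast
  then have distinct: "distinct [\<zero>, a, b, \<one>]"
    by (rule incomparable_distinct)
  then have "card {\<zero>, a, b, \<one>} = 4"
    by simp
  moreover have sub: "{\<zero>, a, b, \<one>} \<subseteq> C"
    using ab by simp
  ultimately have "card (C - {\<zero>, a, b, \<one>}) = 1"
    using assms(2) card_Diff_subset[of "{\<zero>, a, b, \<one>}" C] by simp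
  then obtain c where c: "C - {\<zero>, a, b, \<one>} = {c}"
    by (rule card_1_singletonE)
  then have "c \<notin> {\<zero>, a, b, \<one>}"
    by blast
  then have distinct': "distinct [\<zero>, c, a, b, \<one>]" "distinct [\<zero>, a, b, c, \<one>]"
    using distinct by auto
  have "C = {\<zero>, a, b, \<one>} \<union> {c}"
    using Diff_partition[OF sub] c by simp
  then have C: "C = {\<zero>, c, a, b, \<one>}" "C = {\<zero>, a, b, c, \<one>}"
    by auto
  then have "c \<preceq> a" "c \<preceq> b"
    using five_element_nonchain_shape[OF C(2) distinct'(2) ab(3,4)] by simp_all
  then have "c \<odot> c = c" "rl_isomorphic L square_with_new_bottom"
    using five_element_nonchain_products(5) five_element_nonchain_iso C(1) distinct'(1) ab(3,4)
    by simp_all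
  moreover have "c \<in> C"
    using C(1) by simp
  moreover have "x \<preceq> c \<or> c \<preceq> x" if "x \<in> C" for x
    using that C(1) \<open>c \<in> C\<close> \<open>c \<preceq> a\<close> \<open>c \<preceq> b\<close> by auto
  moreover have "c \<noteq> \<zero>" "c \<noteq> \<one>"
    using distinct'(1) by auto
  ultimately show ?thesis
    using that by blast
qed

text \<open>Part (i): a non-MV BL-algebra with at most five elements has an idempotent \<open>e \<notin> {\<zero>, \<one>}\<close>
  comparable with every element, at which it splits as an ordinal product.\<close>

theorem ordinal_decomposition_if_small_not_MV:
  assumes "finite C" "2 \<le> card C" "card C \<le> 5" "\<not> MV_algebra L"
  shows "\<exists>L1 L2 :: 'a rlat. BL_algebra L1 \<and> BL_algebra L2 \<and> rl_zero L1 \<noteq> rl_one L1 \<and>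
    rl_zero L2 \<noteq> rl_one L2 \<and> ord_prod_ok L1 L2 \<and> rl_isomorphic L (ord_prod L1 L2)"
proof -
  have not_MV_iso: "\<not> rl_isomorphic L R" if "MV_algebra R" for R
    using that assms(4) MV_algebra_if_iso residuated_lattice unfolding rl_isomorphic_def by blast
  have "\<exists>e\<in>C. e \<odot> e = e \<and> e \<noteq> \<zero> \<and> e \<noteq> \<one> \<and> (\<forall>x\<in>C. x \<preceq> e \<or> e \<preceq> x)"
  proof (cases "rl_chain L")
    case True
    then interpret BL_chain L
      using assms(1) by unfold_locales (auto simp: rl_chain_def)
    obtain T where "T \<subseteq> {1..<card C - 1}" "rl_isomorphic L (bl_chain (card C) T)"
        "T = {} \<longleftrightarrow> (\<forall>x\<in>C. x \<odot> x = x \<longrightarrow> x = \<zero> \<or> x = \<one>)"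
      using isomorphic_bl_chain assms(2,3) by blast
    then show ?thesis
      using chain not_MV_iso MV_algebra_bl_chain_empty assms(2,3) by blast
  next
    case False
    then have "card C = 4 \<or> card C = 5"
      using assms(1-3) chain_if_card_le_3 unfolding rl_chain_def by fastforce
    then show ?thesis
    proof
      assume "card C = 4"
      then show ?thesis
        using False assms(1) nonchain_card_4_iso not_MV_iso boolean_square_facts by blast
    next
      assume "card C = 5"
      then show ?thesis
        using False assms(1) nonchain_card_5 by metis
    qed
  qed
  then show ?thesis
    using ordinal_decomposition by blast
qed

end

section \<open>Counting isomorphism classes\<close>

lemma card_quotient_eq_card_representatives:
  assumes equiv: "equiv S R" and reps: "r ` I \<subseteq> S"
    and cover: "\<And>A. A \<in> S \<Longrightarrow> \<exists>i\<in>I. (A, r i) \<in> R"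
    and distinct: "\<And>i j. i \<in> I \<Longrightarrow> j \<in> I \<Longrightarrow> (r i, r j) \<in> R \<Longrightarrow> i = j"
  shows "card (S // R) = card I"
proof -
  have "S // R = (\<lambda>i. R `` {r i}) ` I"
  proof
    show "S // R \<subseteq> (\<lambda>i. R `` {r i}) ` I"
    proof
      fix X assume "X \<in> S // R"
      then obtain A where "A \<in> S" "X = R `` {A}"
        by (rule quotientE)
      then show "X \<in> (\<lambda>i. R `` {r i}) ` I"
        using cover equiv_class_eq[OF equiv] by blast
    qed
    show "(\<lambda>i. R `` {r i}) ` I \<subseteq> S // R"
      using reps by (auto intro: quotientI)
  qed
  moreover have "inj_on (\<lambda>i. R `` {r i}) I"
    using reps distinct eq_equiv_class_iff[OF equiv] by (auto intro!: inj_onI simp: image_subset_iff)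
  ultimately show ?thesis
    by (simp add: card_image)
qed

lemma count_classes_eq_card:
  fixes r :: "'i \<Rightarrow> nat rlat"
  assumes cover: "\<And>A. P A \<Longrightarrow> rl_car A = {0..<n} \<Longrightarrow> \<exists>i\<in>I. rl_isomorphic A (r i)"
    and reps: "\<And>i. i \<in> I \<Longrightarrow> P (r i) \<and> rl_car (r i) = {0..<n}"
    and distinct: "\<And>i j. i \<in> I \<Longrightarrow> j \<in> I \<Longrightarrow> rl_isomorphic (r i) (r j) \<Longrightarrow> i = j"
    and residuated: "\<And>A. P A \<Longrightarrow> residuated_lattice A"
  shows "count_classes P n = card I"
proof -
  let ?S = "{A. P A \<and> rl_car A = {0..<n}}"
  let ?R = "{(A, B). A \<in> ?S \<and> B \<in> ?S \<and> rl_isomorphic A B}"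
  have "equiv ?S ?R"
    using residuated rl_isomorphic_refl rl_isomorphic_sym rl_isomorphic_trans
    unfolding equiv_def refl_on_def sym_def trans_def by blast
  then have "card (?S // ?R) = card I"
    by (rule card_quotient_eq_card_representatives) (use cover reps distinct in auto)
  then show ?thesis
    unfolding count_classes_def Let_def .
qed

lemma isomorphic_bl_chain_if_chain:
  assumes "BL_algebra A" "rl_car A = {0..<n}" "rl_chain A" "2 \<le> n" "n \<le> 5"
  obtains T where "T \<subseteq> {1..<n - 1}" "rl_isomorphic A (bl_chain n T)"
proof -
  interpret BL_chain A
    using assms(1-3) by (simp add: BL_chain_iff)
  have "card (rl_car A) = n"
    using assms(2) by simp
  from isomorphic_bl_chain[unfolded this, OF assms(4,5)] show ?thesis
    using that by blast
qed

lemma not_isomorphic_bl_chain_if_not_chain: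
  assumes "residuated_lattice N" "\<not> rl_chain N" "BL_algebra (bl_chain n T)"
  shows "\<not> rl_isomorphic N (bl_chain n T)" "\<not> rl_isomorphic (bl_chain n T) N"
proof -
  show not_iso: "\<not> rl_isomorphic N (bl_chain n T)"
    using assms rl_chain_if_iso rl_chain_bl_chain unfolding rl_isomorphic_def by blast
  show "\<not> rl_isomorphic (bl_chain n T) N"
    using assms(3) not_iso rl_isomorphic_sym unfolding BL_algebra_def by blast
qed

lemma count_classes_chains_nonchains:
  fixes P :: "nat rlat \<Rightarrow> bool" and Ns :: "nat rlat set"
  assumes n: "2 \<le> n" "n \<le> 5"
    and P_BL: "\<And>A. P A \<Longrightarrow> BL_algebra A"
    and P_iso: "\<And>A B. P A \<Longrightarrow> rl_isomorphic A B \<Longrightarrow> BL_algebra B \<Longrightarrow> P B"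
    and nonchains: "\<And>A. P A \<Longrightarrow> rl_car A = {0..<n} \<Longrightarrow> \<not> rl_chain A \<Longrightarrow> \<exists>N\<in>Ns. rl_isomorphic A N"
    and Ns: "finite Ns" "\<And>N. N \<in> Ns \<Longrightarrow> P N \<and> rl_car N = {0..<n} \<and> \<not> rl_chain N"
      "\<And>N N'. N \<in> Ns \<Longrightarrow> N' \<in> Ns \<Longrightarrow> rl_isomorphic N N' \<Longrightarrow> N = N'"
  shows "count_classes P n = card {T \<in> Pow {1..<n - 1}. P (bl_chain n T)} + card Ns"
proof -
  let ?J = "{T \<in> Pow {1..<n - 1}. P (bl_chain n T)}"
  have chain_BL: "BL_algebra (bl_chain n T)" if "T \<in> Pow {1..<n - 1}" for T
    using that n BL_algebra_bl_chain by blast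
  have P_residuated: "residuated_lattice A" if "P A" for A
    using that P_BL unfolding BL_algebra_def by blast
  have "count_classes P n = card (?J <+> Ns)"
  proof (rule count_classes_eq_card[where r = "case_sum (bl_chain n) id"])
    fix A assume A: "P A" "rl_car A = {0..<n}"
    show "\<exists>i\<in>?J <+> Ns. rl_isomorphic A (case_sum (bl_chain n) id i)"
    proof (cases "rl_chain A")
      case True
      then obtain T where "T \<subseteq> {1..<n - 1}" "rl_isomorphic A (bl_chain n T)"
        using isomorphic_bl_chain_if_chain A n P_BL by metis
      moreover from this have "T \<in> ?J"
        using A P_iso chain_BL by blast
      ultimately show ?thesis
        by (intro bexI[of _ "Inl T"]) auto
    next
      case False
      then obtain N where "N \<in> Ns" "rl_isomorphic A N"
        using A nonchains by blast
      then show ?thesis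
        by (intro bexI[of _ "Inr N"]) auto
    qed
  next
    fix i j assume i: "i \<in> ?J <+> Ns" and j: "j \<in> ?J <+> Ns"
      and iso: "rl_isomorphic (case_sum (bl_chain n) id i) (case_sum (bl_chain n) id j)"
    from i j show "i = j"
    proof (elim PlusE)
      fix T T' assume "T \<in> ?J" "i = Inl T" "T' \<in> ?J" "j = Inl T'"
      then show ?thesis
        using iso bl_chain_isomorphic_imp_eq by auto
    next
      fix T N assume "T \<in> ?J" "i = Inl T" "N \<in> Ns" "j = Inr N"
      then show ?thesis
        using iso not_isomorphic_bl_chain_if_not_chain(2)[of N n T] Ns(2) P_residuated chain_BL by auto
    next
      fix N T assume "N \<in> Ns" "i = Inr N" "T \<in> ?J" "j = Inl T"
      then show ?thesis
        using iso not_isomorphic_bl_chain_if_not_chain(1)[of N n T] Ns(2) P_residuated chain_BL by auto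
    next
      fix N N' assume "N \<in> Ns" "i = Inr N" "N' \<in> Ns" "j = Inr N'"
      then show ?thesis
        using iso Ns(3) by auto
    qed
  qed (use Ns(2) P_residuated in \<open>auto elim!: PlusE\<close>)
  also have "\<dots> = card ?J + card Ns"
    using Ns(1) by (simp add: card_Plus)
  finally show ?thesis .
qed

lemma MV_algebra_bl_chain_iff:
  assumes "2 \<le> n" "n \<le> 5" "T \<subseteq> {1..<n - 1}"
  shows "MV_algebra (bl_chain n T) \<longleftrightarrow> T = {}"
proof
  assume "MV_algebra (bl_chain n T)"
  then interpret MV "bl_chain n T"
    by (simp add: MV_algebra_iff_MV)
  show "T = {}"
  proof (rule ccontr)
    assume "T \<noteq> {}"
    then obtain i where "i \<in> T"
      by blast
    then have i: "1 \<le> i" "i < n - 1"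
      using assms(3) by auto
    then have "i < n" "i \<noteq> 0" "i \<noteq> n - 1"
      by linarith+
    moreover have "chain_mult (n - 1) T i i = i"
      using \<open>i \<in> T\<close> by (simp add: chain_mult_self_iff)
    ultimately show False
      using idempotent_eq_bot_or_top[of i] nat_le_linear[of i "rl_imp (bl_chain n T) i 0"] by auto
  qed
qed (use assms MV_algebra_bl_chain_empty in simp)

lemma rl_chain_if_card_le_3:
  assumes "residuated_lattice A" "finite (rl_car A)" "card (rl_car A) \<le> 3"
  shows "rl_chain A"
proof -
  interpret residuated A
    by (rule residuated.intro) (rule assms(1))
  show ?thesis
    unfolding rl_chain_def using chain_if_card_le_3 assms(2,3) by blast
qed

lemma num_BL_eq:
  assumes n: "2 \<le> n" "n \<le> 5"
    and nonchains: "\<And>A. BL_algebra A \<Longrightarrow> rl_car A = {0..<n} \<Longrightarrow> \<not> rl_chain A \<Longrightarrow> \<exists>N\<in>Ns. rl_isomorphic A N"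
    and Ns: "finite Ns" "\<And>N. N \<in> Ns \<Longrightarrow> BL_algebra N \<and> rl_car N = {0..<n} \<and> \<not> rl_chain N"
      "\<And>N N'. N \<in> Ns \<Longrightarrow> N' \<in> Ns \<Longrightarrow> rl_isomorphic N N' \<Longrightarrow> N = N'"
  shows "num_BL n = 2 ^ (n - 2) + card Ns"
proof -
  have P_BL: "\<And>A. BL_algebra A \<Longrightarrow> BL_algebra A"
    and P_iso: "\<And>A B. BL_algebra A \<Longrightarrow> rl_isomorphic A B \<Longrightarrow> BL_algebra B \<Longrightarrow> BL_algebra B"
    by simp_all
  have "num_BL n = card {T \<in> Pow {1..<n - 1}. BL_algebra (bl_chain n T)} + card Ns"
    by (rule count_classes_chains_nonchains[OF n P_BL P_iso nonchains Ns])
  also have "{T \<in> Pow {1..<n - 1}. BL_algebra (bl_chain n T)} = Pow {1..<n - 1}"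
    using BL_algebra_bl_chain[OF n] by blast
  finally show ?thesis
    by (simp add: card_Pow)
qed

lemma num_MV_eq:
  assumes n: "2 \<le> n" "n \<le> 5"
    and nonchains: "\<And>A. MV_algebra A \<Longrightarrow> rl_car A = {0..<n} \<Longrightarrow> \<not> rl_chain A \<Longrightarrow> \<exists>N\<in>Ns. rl_isomorphic A N"
    and Ns: "finite Ns" "\<And>N. N \<in> Ns \<Longrightarrow> MV_algebra N \<and> rl_car N = {0..<n} \<and> \<not> rl_chain N"
      "\<And>N N'. N \<in> Ns \<Longrightarrow> N' \<in> Ns \<Longrightarrow> rl_isomorphic N N' \<Longrightarrow> N = N'"
  shows "num_MV n = 1 + card Ns"
proof -
  have chains: "{T \<in> Pow {1..<n - 1}. MV_algebra (bl_chain n T)} = {{}}"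
    using n MV_algebra_bl_chain_iff by auto
  have MV_iso: "MV_algebra B" if A: "MV_algebra A" "rl_isomorphic A B" and B: "BL_algebra B" for A B
  proof -
    obtain f where "rl_iso f B A"
      using A rl_isomorphic_sym unfolding rl_isomorphic_def MV_algebra_def by blast
    then show ?thesis
      using A B MV_algebra_if_iso unfolding BL_algebra_def by blast
  qed
  have "num_MV n = card {T \<in> Pow {1..<n - 1}. MV_algebra (bl_chain n T)} + card Ns"
    by (rule count_classes_chains_nonchains[OF n BL_algebra_if_MV_algebra MV_iso nonchains Ns])
  then show ?thesis
    using chains by simp
qed

lemma not_MV_if_iso_square_with_new_bottom:
  assumes "MV_algebra A" "rl_isomorphic A square_with_new_bottom"
  shows False
proof -
  obtain f where "rl_iso f square_with_new_bottom A"
    using assms rl_isomorphic_sym unfolding rl_isomorphic_def MV_algebra_def by blast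
  then show False
    using assms square_with_new_bottom_facts MV_algebra_if_iso unfolding BL_algebra_def by blast
qed

lemma num_BL_small: "num_BL 2 = 1" "num_BL 3 = 2" "num_BL 4 = 5" "num_BL 5 = 9"
proof -
  have chain: "rl_chain A" if "BL_algebra A" "rl_car A = {0..<n}" "n \<le> 3" for A and n :: nat
    using that rl_chain_if_card_le_3[of A] unfolding BL_algebra_def by simp
  have "num_BL 2 = 2 ^ (2 - 2) + card ({} :: nat rlat set)"
    by (rule num_BL_eq) (use chain[of _ 2] in auto)
  then show "num_BL 2 = 1"
    by simp
  have "num_BL 3 = 2 ^ (3 - 2) + card ({} :: nat rlat set)"
    by (rule num_BL_eq) (use chain[of _ 3] in auto)
  then show "num_BL 3 = 2"
    by simp
  have "num_BL 4 = 2 ^ (4 - 2) + card {boolean_square 0}"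
  proof (rule num_BL_eq)
    fix A :: "nat rlat" assume "BL_algebra A" "rl_car A = {0..<4}" "\<not> rl_chain A"
    then show "\<exists>N\<in>{boolean_square 0}. rl_isomorphic A N"
      using BL.nonchain_card_4_iso[of A] BL_algebra_iff_BL by auto
  qed (use boolean_square_facts in auto)
  then show "num_BL 4 = 5"
    by simp
  have "num_BL 5 = 2 ^ (5 - 2) + card {square_with_new_bottom}"
  proof (rule num_BL_eq)
    fix A :: "nat rlat" assume "BL_algebra A" "rl_car A = {0..<5}" "\<not> rl_chain A"
    then show "\<exists>N\<in>{square_with_new_bottom}. rl_isomorphic A N"
      using BL.nonchain_card_5[of A] BL_algebra_iff_BL by auto
  qed (use square_with_new_bottom_facts in auto)
  then show "num_BL 5 = 9"
    by simp
qed

lemma num_MV_small: "num_MV 2 = 1" "num_MV 3 = 1" "num_MV 4 = 2" "num_MV 5 = 1"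
proof -
  have chain: "rl_chain A" if "MV_algebra A" "rl_car A = {0..<n}" "n \<le> 3" for A and n :: nat
    using that rl_chain_if_card_le_3[of A] unfolding MV_algebra_def by simp
  have "num_MV 2 = 1 + card ({} :: nat rlat set)"
    by (rule num_MV_eq) (use chain[of _ 2] in auto)
  then show "num_MV 2 = 1"
    by simp
  have "num_MV 3 = 1 + card ({} :: nat rlat set)"
    by (rule num_MV_eq) (use chain[of _ 3] in auto)
  then show "num_MV 3 = 1"
    by simp
  have "num_MV 4 = 1 + card {boolean_square 0}"
  proof (rule num_MV_eq)
    fix A :: "nat rlat" assume "MV_algebra A" "rl_car A = {0..<4}" "\<not> rl_chain A"
    then show "\<exists>N\<in>{boolean_square 0}. rl_isomorphic A N"
      using BL.nonchain_card_4_iso[of A] BL_algebra_iff_BL BL_algebra_if_MV_algebra by auto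
  qed (use boolean_square_facts in auto)
  then show "num_MV 4 = 2"
    by simp
  have "num_MV 5 = 1 + card ({} :: nat rlat set)"
  proof (rule num_MV_eq)
    fix A :: "nat rlat" assume A: "MV_algebra A" "rl_car A = {0..<5}" "\<not> rl_chain A"
    then have "rl_isomorphic A square_with_new_bottom"
      using BL.nonchain_card_5[of A] BL_algebra_iff_BL BL_algebra_if_MV_algebra by auto
    then show "\<exists>N\<in>{}. rl_isomorphic A N"
      using A not_MV_if_iso_square_with_new_bottom by blast
  qed auto
  then show "num_MV 5 = 1"
    by simp
qed

section \<open>Multiplicative partitions of small numbers\<close>

lemma factors_of_le_5:
  fixes a b :: nat
  assumes "2 \<le> a" "2 \<le> b" "a * b \<le> 5"
  shows "a = 2 \<and> b = 2"
proof -
  have "\<not> 3 \<le> a" "\<not> 3 \<le> b"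
    using assms mult_le_mono[of 3 a 2 b] mult_le_mono[of 2 a 3 b] by auto
  then show ?thesis
    using assms by simp
qed

lemma factorization_le_5_eq:
  fixes M :: "nat multiset"
  assumes M: "size M \<ge> 2" "\<forall>x\<in>#M. x > 1" "prod_mset M \<le> 5"
  shows "M = {#2, 2#}"
proof -
  have "M \<noteq> {#}"
    using M(1) by (intro notI) simp
  then obtain a where "a \<in># M"
    by (rule multiset_nonemptyE)
  then obtain M1 where M1: "M = add_mset a M1"
    by (auto dest: multi_member_split)
  have "M1 \<noteq> {#}"
    using M(1) M1 by (intro notI) simp
  then obtain b where "b \<in># M1"
    by (rule multiset_nonemptyE)
  then obtain M' where M': "M = add_mset a (add_mset b M')"
    using M1 by (auto dest: multi_member_split)
  have factors: "2 \<le> a" "2 \<le> b" "\<forall>x\<in>#M'. 1 < x"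
    using M(2) M' by auto
  then have "prod_mset M' \<noteq> 0"
    by (auto simp: prod_mset_zero_iff)
  then have "1 \<le> prod_mset M'"
    by linarith
  then have "a * b * 1 \<le> a * b * prod_mset M'"
    by (rule mult_le_mono2)
  also have "a * b * prod_mset M' \<le> 5"
    using M(3) M' by (simp add: mult.assoc)
  finally have "a = 2" "b = 2"
    using factors(1,2) factors_of_le_5 by auto
  then have "prod_mset M' = 1"
    using M(3) M' \<open>1 \<le> prod_mset M'\<close> by simp
  then have "M' = {#}"
    using factors(3) dvd_prod_mset[of _ M'] by (metis multiset_nonemptyE nat_dvd_1_iff_1 less_irrefl)
  then show ?thesis
    using M' \<open>a = 2\<close> \<open>b = 2\<close> by simp
qed

lemma mult_partitions_le_5:
  assumes "n \<le> 5"
  shows "mult_partitions n = (if n = 4 then 1 else 0)"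
proof -
  let ?S = "{M :: nat multiset. size M \<ge> 2 \<and> (\<forall>x\<in>#M. x > 1) \<and> prod_mset M = n}"
  have "?S \<subseteq> (if n = 4 then {{#2, 2#}} else {})"
  proof
    fix M assume "M \<in> ?S"
    moreover from this have "M = {#2, 2#}"
      using assms factorization_le_5_eq[of M] by simp
    ultimately show "M \<in> (if n = 4 then {{#2, 2#}} else {})"
      by auto
  qed
  moreover have "(if n = 4 then {{#2, 2#}} else {}) \<subseteq> ?S"
    by simp
  ultimately have "?S = (if n = 4 then {{#2, 2#}} else {})"
    by (rule subset_antisym)
  then show ?thesis
    unfolding mult_partitions_def by simp
qed

theorem theorem4p7:
  shows "(\<forall>A :: 'a rlat. BL_algebra A \<and> finite (rl_car A) \<and> 2 \<le> card (rl_car A) \<and>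
            card (rl_car A) \<le> 5 \<and> \<not> MV_algebra A \<longrightarrow>
          (\<exists>L1 L2 :: 'a rlat. BL_algebra L1 \<and> BL_algebra L2 \<and>
             rl_zero L1 \<noteq> rl_one L1 \<and> rl_zero L2 \<noteq> rl_one L2 \<and>
             ord_prod_ok L1 L2 \<and> rl_isomorphic A (ord_prod L1 L2)))
   \<and> (num_BL 2 = num_MV 2 \<and> num_MV 2 = mult_partitions 2 + 1)
   \<and> (num_BL 3 = num_MV 3 + num_BL 2 \<and>
      num_MV 3 + num_BL 2 = mult_partitions 3 + mult_partitions 2 + 2)
   \<and> (num_BL 4 = num_MV 4 + num_BL 3 + num_BL 2 \<and>
      num_MV 4 + num_BL 3 + num_BL 2 =
        mult_partitions 4 + mult_partitions 3 + 2 * mult_partitions 2 + 4)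
   \<and> (num_BL 5 = num_MV 5 + num_BL 4 + num_BL 3 + num_BL 2 \<and>
      num_MV 5 + num_BL 4 + num_BL 3 + num_BL 2 =
        mult_partitions 5 + mult_partitions 4 + 2 * mult_partitions 3 + 4 * mult_partitions 2 + 8)"
proof -
  have "\<exists>L1 L2 :: 'a rlat. BL_algebra L1 \<and> BL_algebra L2 \<and> rl_zero L1 \<noteq> rl_one L1 \<and>
      rl_zero L2 \<noteq> rl_one L2 \<and> ord_prod_ok L1 L2 \<and> rl_isomorphic A (ord_prod L1 L2)"
    if "BL_algebra A" "finite (rl_car A)" "2 \<le> card (rl_car A)" "card (rl_car A) \<le> 5" "\<not> MV_algebra A"
    for A :: "'a rlat"
    using that BL.ordinal_decomposition_if_small_not_MV[of A] by (simp add: BL_algebra_iff_BL)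
  moreover have "mult_partitions 2 = 0" "mult_partitions 3 = 0" "mult_partitions 4 = 1"
    "mult_partitions 5 = 0"
    by (simp_all add: mult_partitions_le_5)
  ultimately show ?thesis
    using num_BL_small num_MV_small by simp
qed

end
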